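(* In the setting described in the context, for every $\bm{x}\in\mathcal{X}_t(\{\bm{x}_0\})$ there exists $(\bm{\sigma},\lambda)\in\mathcal{W}_t\times[0,1]$ such that $$\bm{x}=\bm{\pi}(\bm{\sigma},\lambda):=\lambda\,\bm{x}^{\rm upper}(\bm{\sigma})+(1-\lambda)\,\bm{x}^{\rm lower}(\bm{\sigma});$$ i.e., the map $\bm{\pi}:\mathcal{W}_t\times[0,1]\to\mathcal{X}_t(\{\bm{x}_0\})$ is surjective.
   Context: Let $\bm{A}\in\mathbb{R}^{n\times n}$, $\bm{b}\in\mathbb{R}^n$ with $(\bm{A},\bm{b})$ controllable and $\bm{A}$ having $n$ distinct eigenvalues; let $v_{\min}\le v_{\max}$ be constants, $\bm{z}_0\in\mathbb{R}^n$, $t>0$, and $\bm{x}_0:=\bm{M}\bm{z}_0$. Here $\bm{C}=(\bm{b},\bm{A}\bm{b},\dots,\bm{A}^{n-1}\bm{b})$, $\bm{q}^\top$ is the last row of $\bm{C}^{-1}$, $\bm{M}$ has rows $\bm{q}^\top,\bm{q}^\top\bm{A},\dots,\bm{q}^\top\bm{A}^{n-1}$; $\bm{c}=(c_0,\dots,c_{n-1})^\top$ are the coefficients of the characteristic polynomial $\lambda^n+c_{n-1}\lambda^{n-1}+\dots+c_0$ of $\bm{A}$; $\bm{A}_{\rm con}=\bm{M}\bm{A}\bm{M}^{-1}$ is the companion matrix with first $n-1$ rows $(\bm{0}\ \bm{I}_{n-1})$ and last row $-\bm{c}^\top$; $\bm{b}_{\rm con}=(0,\dots,0,1)^\top$;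 $\bm{A}_{\rm int}$ has first $n-1$ rows $(\bm{0}\ \bm{I}_{n-1})$ and last row zero. For $0\le s\le t$, with $f(\tau)=\langle\bm{c},e^{(s-\tau)\bm{A}_{\rm con}}\bm{b}_{\rm con}\rangle$ and $I(v)=v(s)-\int_0^s f(\tau)v(\tau)\,{\rm d}\tau$, let $I_{\min}(s),I_{\max}(s)$ be the inf and sup of $I(v)$ over $v\in C([0,s])$ with $v_{\min}\le v\le v_{\max}$, and $u_{\min}(s)=-\langle\bm{c},e^{s\bm{A}_{\rm con}}\bm{M}\bm{z}_0\rangle+I_{\min}(s)$, $u_{\max}(s)=-\langle\bm{c},e^{s\bm{A}_{\rm con}}\bm{M}\bm{z}_0\rangle+I_{\max}(s)$. The integrator reach set $\mathcal{X}_t(\{\bm{x}_0\})$ is the set of $\bm{x}(t)$ with $\dot{\bm{x}}=\bm{A}_{\rm int}\bm{x}+\bm{b}_{\rm con}u$, $\bm{x}(0)=\bm{x}_0$, $u\in C([0,t])$, $u_{\min}(s)\le u(s)\le u_{\max}(s)$ for all $s$. Define $\mu=(u_{\max}-u_{\min})/2$, $\nu=(u_{\max}+u_{\min})/2$, $\bm{\xi}(s)=\big(\tfrac{s^{n-1}}{(n-1)!},\dots,s,1\big)^\top$, $\chi_k(t,\bm{x}_0)=\sum_{\ell=k}^{n}\frac{t^{\ell-k}}{(\ell-k)!}x_{\ell0}$, $\mathcal{W}_t:=\{\bm{\sigma}\in\mathbb{R}^{n-1}\mid 0\le\sigma_1\le\dots\le\sigma_{n-1}\le t\}$, and, with $\sigma_0:=0,\sigma_n:=t$,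 $\bm{x}^{\rm upper/lower}(\bm{\sigma})=\bm{\chi}(t,\bm{x}_0)+\int_0^t\nu(s)\bm{\xi}(t-s)\,{\rm d}s\pm\sum_{i=1}^{n}(-1)^{i-1}\int_{\sigma_{i-1}}^{\sigma_i}\mu(s)\bm{\xi}(t-s)\,{\rm d}s$ (plus sign for upper, minus for lower); these are the points of the two bounding surfaces of $\mathcal{X}_t(\{\bm{x}_0\})$. *)

theory Defs
  imports "HOL-Analysis.Analysis" "Jordan_Normal_Form.Char_Poly"
begin

(* Indices are 0-based: paper index k (1 \<le> k \<le> n) corresponds to Isabelle index k - 1. *)

definition ctrb_mat :: "nat \<Rightarrow> real mat \<Rightarrow> real vec \<Rightarrow> real mat" where
  "ctrb_mat n A b = mat n n (\<lambda>(i,j). ((A ^\<^sub>m j) *\<^sub>v b) $ i)"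

(* Kalman rank condition: C has full rank n, i.e. (C square) C invertible *)
definition controllable :: "nat \<Rightarrow> real mat \<Rightarrow> real vec \<Rightarrow> bool" where
  "controllable n A b \<longleftrightarrow> invertible_mat (ctrb_mat n A b)"

definition mat_inv :: "real mat \<Rightarrow> real mat" where
  "mat_inv C = (SOME B. inverts_mat C B \<and> inverts_mat B C)"

definition distinct_eigenvalues :: "nat \<Rightarrow> real mat \<Rightarrow> bool" where
  "distinct_eigenvalues n A \<longleftrightarrow>
     card {k :: complex. eigenvalue (map_mat complex_of_real A) k} = n"

definition qvec :: "nat \<Rightarrow> real mat \<Rightarrow> real vec \<Rightarrow> real vec" where
  "qvec n A b = row (mat_inv (ctrb_mat n A b)) (n - 1)"

definition Mmat :: "nat \<Rightarrow> real mat \<Rightarrow> real vec \<Rightarrow> real mat" where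
  "Mmat n A b = mat n n (\<lambda>(i,j). row (mat_of_rows n [qvec n A b] * (A ^\<^sub>m i)) 0 $ j)"

definition cvec :: "nat \<Rightarrow> real mat \<Rightarrow> real vec" where
  "cvec n A = vec n (\<lambda>k. coeff (char_poly A) k)"

definition Acon :: "nat \<Rightarrow> real mat \<Rightarrow> real mat" where
  "Acon n A = mat n n (\<lambda>(i,j). if i < n - 1 then (if j = i + 1 then 1 else 0)
                                 else - (cvec n A $ j))"

definition bcon :: "nat \<Rightarrow> real vec" where
  "bcon n = unit_vec n (n - 1)"

definition Aint :: "nat \<Rightarrow> real mat" where
  "Aint n = mat n n (\<lambda>(i,j). if i < n - 1 \<and> j = i + 1 then 1 else 0)"

definition mat_exp :: "nat \<Rightarrow> real \<Rightarrow> real mat \<Rightarrow> real mat" where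
  "mat_exp n s B = mat n n (\<lambda>(i,j). \<Sum>k. (s ^ k / fact k) * ((B ^\<^sub>m k) $$ (i,j)))"

definition fker :: "nat \<Rightarrow> real mat \<Rightarrow> real \<Rightarrow> real \<Rightarrow> real" where
  "fker n A s \<tau> = cvec n A \<bullet> (mat_exp n (s - \<tau>) (Acon n A) *\<^sub>v bcon n)"

definition Ifun :: "nat \<Rightarrow> real mat \<Rightarrow> real \<Rightarrow> (real \<Rightarrow> real) \<Rightarrow> real" where
  "Ifun n A s v = v s - integral {0..s} (\<lambda>\<tau>. fker n A s \<tau> * v \<tau>)"

definition admissible_v :: "real \<Rightarrow> real \<Rightarrow> real \<Rightarrow> (real \<Rightarrow> real) \<Rightarrow> bool" where
  "admissible_v vmin vmax s v \<longleftrightarrow>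
     continuous_on {0..s} v \<and> (\<forall>\<tau>\<in>{0..s}. vmin \<le> v \<tau> \<and> v \<tau> \<le> vmax)"

definition Imin :: "nat \<Rightarrow> real mat \<Rightarrow> real \<Rightarrow> real \<Rightarrow> real \<Rightarrow> real" where
  "Imin n A vmin vmax s = Inf {Ifun n A s v | v. admissible_v vmin vmax s v}"

definition Imax :: "nat \<Rightarrow> real mat \<Rightarrow> real \<Rightarrow> real \<Rightarrow> real \<Rightarrow> real" where
  "Imax n A vmin vmax s = Sup {Ifun n A s v | v. admissible_v vmin vmax s v}"

definition umin :: "nat \<Rightarrow> real mat \<Rightarrow> real vec \<Rightarrow> real \<Rightarrow> real \<Rightarrow> real vec \<Rightarrow> real \<Rightarrow> real" where
  "umin n A b vmin vmax z0 s =
     - (cvec n A \<bullet> (mat_exp n s (Acon n A) *\<^sub>v (Mmat n A b *\<^sub>v z0))) + Imin n A vmin vmax s"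

definition umax :: "nat \<Rightarrow> real mat \<Rightarrow> real vec \<Rightarrow> real \<Rightarrow> real \<Rightarrow> real vec \<Rightarrow> real \<Rightarrow> real" where
  "umax n A b vmin vmax z0 s =
     - (cvec n A \<bullet> (mat_exp n s (Acon n A) *\<^sub>v (Mmat n A b *\<^sub>v z0))) + Imax n A vmin vmax s"

definition reach_int :: "nat \<Rightarrow> (real \<Rightarrow> real) \<Rightarrow> (real \<Rightarrow> real) \<Rightarrow> real \<Rightarrow> real vec \<Rightarrow> real vec set" where
  "reach_int n ul uh t x0 = {x t | x u.
      continuous_on {0..t} u \<and> (\<forall>s\<in>{0..t}. ul s \<le> u s \<and> u s \<le> uh s) \<and>
      (\<forall>s. dim_vec (x s) = n) \<and> x 0 = x0 \<and>
      (\<forall>s\<in>{0..t}. \<forall>i<n.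
         ((\<lambda>r. x r $ i) has_real_derivative ((Aint n *\<^sub>v x s + u s \<cdot>\<^sub>v bcon n) $ i))
           (at s within {0..t}))}"

definition xi :: "nat \<Rightarrow> real \<Rightarrow> real vec" where
  "xi n s = vec n (\<lambda>i. s ^ (n - 1 - i) / fact (n - 1 - i))"

definition chi :: "nat \<Rightarrow> real \<Rightarrow> real vec \<Rightarrow> real vec" where
  "chi n t x0 = vec n (\<lambda>k. \<Sum>l=k..n-1. t ^ (l - k) / fact (l - k) * x0 $ l)"

definition sig_ext :: "nat \<Rightarrow> real \<Rightarrow> real vec \<Rightarrow> nat \<Rightarrow> real" where
  "sig_ext n t \<sigma> i = (if i = 0 then 0 else if i = n then t else \<sigma> $ (i - 1))"

definition Wset :: "nat \<Rightarrow> real \<Rightarrow> real vec set" where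
  "Wset n t = {\<sigma>. dim_vec \<sigma> = n - 1 \<and> (\<forall>i<n. sig_ext n t \<sigma> i \<le> sig_ext n t \<sigma> (i + 1))}"

definition x_bound :: "nat \<Rightarrow> real \<Rightarrow> (real \<Rightarrow> real) \<Rightarrow> (real \<Rightarrow> real) \<Rightarrow> real \<Rightarrow> real vec
                        \<Rightarrow> real vec \<Rightarrow> real vec" where
  "x_bound n sg ul uh t x0 \<sigma> = vec n (\<lambda>k.
      chi n t x0 $ k
      + integral {0..t} (\<lambda>s. (uh s + ul s) / 2 * xi n (t - s) $ k)
      + sg * (\<Sum>i=1..n. (-1) ^ (i - 1) *
           integral {sig_ext n t \<sigma> (i - 1)..sig_ext n t \<sigma> i}
             (\<lambda>s. (uh s - ul s) / 2 * xi n (t - s) $ k)))"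

definition x_upper where "x_upper n ul uh t x0 \<sigma> = x_bound n 1 ul uh t x0 \<sigma>"
definition x_lower where "x_lower n ul uh t x0 \<sigma> = x_bound n (-1) ul uh t x0 \<sigma>"

end

theory Submission
  imports Defs
begin

(* By Taylor's formula for the integrator chain, a reachable state is
   x(t) = \<chi>(t, x0) + \<integral> \<xi>(t - s) u(s) ds.  Writing u = \<nu> + w with |w| \<le> \<mu>, it suffices to show that
   the moment vector p = \<integral> w(s) \<xi>(t - s) ds equals c \<Sigma>\<^sub>i (-1)^i \<integral>[\<sigma>\<^sub>i, \<sigma>\<^sub>i\<^sub>+\<^sub>1] \<mu>(s) \<xi>(t - s) ds
   for some \<sigma> \<in> W_t and c \<in> [-1, 1].  For every direction \<eta> we have <\<eta>, p> \<le> h(\<eta>), where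
   h(\<eta>) = \<integral> \<mu> |<\<eta>, \<xi>(t - s)>| ds is the support function of all such moment vectors.  Let R \<le> 1 be
   the least constant with <\<eta>, p> \<le> R h(\<eta>); by compactness of the unit sphere it is attained at
   some direction l.  The polynomial s \<mapsto> <l, \<xi>(t - s)> has degree < n, so it changes sign at most
   n - 1 times; its sign changes give \<sigma> and a leading sign c.  First-order optimality of l in
   the directions d and -d then forces <d, p> = R c \<Sigma>\<^sub>i (-1)^i \<integral>[\<sigma>\<^sub>i, \<sigma>\<^sub>i\<^sub>+\<^sub>1] \<mu> <d, \<xi>(t - s)> ds, and
   \<lambda> = (1 + R c) / 2 is the required weight.  The closed forms of I_min and I_max make u_min and
   u_max continuous, which the argument needs throughout. *)

unbundle no vec_syntax and no inner_syntax

definition taylor_kernel :: "nat \<Rightarrow> real \<Rightarrow> nat \<Rightarrow> real \<Rightarrow> real" where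
  "taylor_kernel n t k s = (t - s) ^ (n - 1 - k) / fact (n - 1 - k)"

definition kernel_poly :: "nat \<Rightarrow> real \<Rightarrow> (nat \<Rightarrow> real) \<Rightarrow> real \<Rightarrow> real" where
  "kernel_poly n t \<eta> s = (\<Sum>k<n. \<eta> k * taylor_kernel n t k s)"

lemma continuous_on_taylor_kernel [continuous_intros]: "continuous_on S (taylor_kernel n t k)"
  unfolding taylor_kernel_def[abs_def] by (intro continuous_intros) simp

lemma continuous_on_kernel_poly [continuous_intros]: "continuous_on S (kernel_poly n t \<eta>)"
  unfolding kernel_poly_def[abs_def] by (intro continuous_intros)

lemma kernel_poly_scale: "kernel_poly n t (\<lambda>k. c * \<eta> k) s = c * kernel_poly n t \<eta> s"
  by (simp add: kernel_poly_def sum_distrib_left mult_ac)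

lemma kernel_poly_add_scaled:
  "kernel_poly n t (\<lambda>k. \<eta> k + c * d k) s = kernel_poly n t \<eta> s + c * kernel_poly n t d s"
  by (simp add: kernel_poly_def sum_distrib_left algebra_simps sum.distrib)

lemma kernel_poly_unit:
  assumes "k < n"
  shows "kernel_poly n t (\<lambda>j. if j = k then 1 else 0) s = taylor_kernel n t k s"
proof -
  have "kernel_poly n t (\<lambda>j. if j = k then 1 else 0) s = (\<Sum>j<n. if j = k then taylor_kernel n t j s else 0)"
    unfolding kernel_poly_def by (intro sum.cong) auto
  then show ?thesis using assms by simp
qed

lemma kernel_poly_zeros:
  assumes "\<exists>k<n. \<eta> k \<noteq> 0"
  shows "finite {s. kernel_poly n t \<eta> s = 0}" and "card {s. kernel_poly n t \<eta> s = 0} \<le> n - 1"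
proof -
  define p :: "real poly" where "p = (\<Sum>j<n. monom (\<eta> (n - 1 - j) / fact j) j)"
  have coeff_p: "coeff p i = (if i < n then \<eta> (n - 1 - i) / fact i else 0)" for i
    unfolding p_def coeff_sum coeff_monom by auto
  have kernel_poly_eq: "kernel_poly n t \<eta> s = poly p (t - s)" for s
  proof -
    have "kernel_poly n t \<eta> s = (\<Sum>j<n. \<eta> (n - Suc j) * taylor_kernel n t (n - Suc j) s)"
      unfolding kernel_poly_def by (rule sum.nat_diff_reindex[symmetric])
    then show ?thesis
      by (auto simp: p_def poly_sum poly_monom taylor_kernel_def Suc_diff_Suc intro!: sum.cong)
  qed
  have zeros_eq: "{s. kernel_poly n t \<eta> s = 0} = (\<lambda>r. t - r) ` {r. poly p r = 0}"
    by (auto simp: kernel_poly_eq image_iff intro!: exI[where x="t - _"])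
  have "p \<noteq> 0"
  proof
    assume "p = 0"
    from assms obtain k where "k < n" "\<eta> k \<noteq> 0" by blast
    then show False using \<open>p = 0\<close> coeff_p[of "n - 1 - k"] by (auto simp: Suc_diff_Suc)
  qed
  then have fin: "finite {r. poly p r = 0}" by (rule poly_roots_finite)
  then show "finite {s. kernel_poly n t \<eta> s = 0}" unfolding zeros_eq by simp
  have "card {s. kernel_poly n t \<eta> s = 0} \<le> card {r. poly p r = 0}"
    unfolding zeros_eq by (rule card_image_le[OF fin])
  also have "\<dots> \<le> degree p" using \<open>p \<noteq> 0\<close> by (rule card_poly_roots_bound)
  also have "\<dots> \<le> n - 1" by (rule degree_le) (auto simp: coeff_p)
  finally show "card {s. kernel_poly n t \<eta> s = 0} \<le> n - 1" .
qed

lemma continuous_nonvanishing_const_sign: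
  fixes f :: "real \<Rightarrow> real"
  assumes "x \<le> y" "continuous_on {x..y} f" "\<And>s. x < s \<Longrightarrow> s < y \<Longrightarrow> f s \<noteq> 0"
  shows "\<exists>e\<in>{-1,1::real}. \<forall>s\<in>{x..y}. 0 \<le> e * f s"
proof (cases "\<exists>s\<in>{x..y}. f s > 0")
  case True
  then obtain s where s: "s \<in> {x..y}" "f s > 0" by blast
  have "0 \<le> f s'" if s': "s' \<in> {x..y}" for s'
  proof (rule ccontr)
    assume "\<not> 0 \<le> f s'"
    then obtain r where r: "r \<in> {min s s'..max s s'}" "f r = 0"
      using IVT2'[of f s' 0 s] IVT'[of f s' 0 s] s s' continuous_on_subset[OF assms(2)]
      by (cases "s \<le> s'") (force simp: min_def max_def)+
    then have "x < r" "r < y"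
      using s s' \<open>\<not> 0 \<le> f s'\<close> by (auto simp: order.order_iff_strict min_def max_def split: if_splits)
    then show False using assms(3) r(2) by blast
  qed
  then show ?thesis by (intro bexI[of _ 1]) auto
next
  case False
  then show ?thesis by (intro bexI[of _ "-1"]) (auto simp: not_less)
qed

(* A sorted list L of switching points in [\<alpha>, \<beta>] partitions it into the intervals
   [partition_point i, partition_point (i + 1)], i \<le> length L; beyond that all points are \<beta>. *)
definition partition_point :: "real \<Rightarrow> real \<Rightarrow> real list \<Rightarrow> nat \<Rightarrow> real" where
  "partition_point \<alpha> \<beta> L i = (if i = 0 then \<alpha> else if i \<le> length L then L ! (i - 1) else \<beta>)"

definition alternating_sign :: "(real \<Rightarrow> real) \<Rightarrow> real \<Rightarrow> real \<Rightarrow> real list \<Rightarrow> real \<Rightarrow> bool" where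
  "alternating_sign f \<alpha> \<beta> L c \<longleftrightarrow> sorted L \<and> set L \<subseteq> {\<alpha>..\<beta>} \<and> c \<in> {-1, 1} \<and>
     (\<forall>i \<le> length L. \<forall>s \<in> {partition_point \<alpha> \<beta> L i..partition_point \<alpha> \<beta> L (Suc i)}.
        0 \<le> c * (-1) ^ i * f s)"

lemma alternating_sign_prolong:
  assumes alt: "alternating_sign f \<alpha> z L c" and "z \<le> \<beta>"
    and last: "\<And>s. s \<in> {z..\<beta>} \<Longrightarrow> 0 \<le> c * (-1) ^ length L * f s"
  shows "alternating_sign f \<alpha> \<beta> L c"
proof -
  have pp: "partition_point \<alpha> \<beta> L j = partition_point \<alpha> z L j" if "j \<le> length L" for j
    using that by (simp add: partition_point_def)
  have "0 \<le> c * (-1) ^ i * f s"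
    if i: "i \<le> length L" and s: "s \<in> {partition_point \<alpha> \<beta> L i..partition_point \<alpha> \<beta> L (Suc i)}" for i s
  proof (cases "i < length L \<or> s \<le> z")
    case True
    then have "s \<in> {partition_point \<alpha> z L i..partition_point \<alpha> z L (Suc i)}"
      using s pp[OF i] pp[of "Suc i"] by (auto simp: partition_point_def)
    then show ?thesis using alt i unfolding alternating_sign_def by blast
  next
    case False
    then have "i = length L" "s \<in> {z..\<beta>}" using i s by (auto simp: partition_point_def)
    then show ?thesis using last by simp
  qed
  then show ?thesis using alt \<open>z \<le> \<beta>\<close> by (auto simp: alternating_sign_def)
qed

lemma alternating_sign_snoc:
  assumes alt: "alternating_sign f \<alpha> z L c" and "\<alpha> \<le> z" "z \<le> \<beta>"
    and last: "\<And>s. s \<in> {z..\<beta>} \<Longrightarrow> 0 \<le> c * (-1) ^ Suc (length L) * f s"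
  shows "alternating_sign f \<alpha> \<beta> (L @ [z]) c"
proof -
  have pp: "partition_point \<alpha> \<beta> (L @ [z]) j = partition_point \<alpha> z L j" if "j \<le> Suc (length L)" for j
    using that by (auto simp: partition_point_def nth_append)
  have "0 \<le> c * (-1) ^ i * f s"
    if i: "i \<le> Suc (length L)"
      and s: "s \<in> {partition_point \<alpha> \<beta> (L @ [z]) i..partition_point \<alpha> \<beta> (L @ [z]) (Suc i)}" for i s
  proof (cases "i \<le> length L")
    case True
    then show ?thesis using alt s pp[of i] pp[of "Suc i"] unfolding alternating_sign_def by simp
  next
    case False
    then have "i = Suc (length L)" "s \<in> {z..\<beta>}" using i s pp[of i] by (auto simp: partition_point_def)
    then show ?thesis using last by simp
  qed
  then show ?thesis
    using alt \<open>\<alpha> \<le> z\<close> \<open>z \<le> \<beta>\<close> by (auto simp: alternating_sign_def sorted_append)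
qed

lemma alternating_sign_extend:
  assumes alt: "alternating_sign f \<alpha> z L c" and "\<alpha> \<le> z" "z \<le> \<beta>"
    and e: "e \<in> {-1, 1}" "\<And>s. s \<in> {z..\<beta>} \<Longrightarrow> 0 \<le> e * f s"
  shows "\<exists>L'. alternating_sign f \<alpha> \<beta> L' c \<and> length L' \<le> Suc (length L)"
proof (cases "e = c * (-1) ^ length L")
  case True
  then show ?thesis using alternating_sign_prolong[OF alt \<open>z \<le> \<beta>\<close>] e(2) by auto
next
  case False
  have "c \<in> {-1, 1}" using alt by (simp add: alternating_sign_def)
  with False e(1) have "e = c * (-1) ^ Suc (length L)" by (cases "even (length L)") auto
  then show ?thesis using alternating_sign_snoc[OF alt \<open>\<alpha> \<le> z\<close> \<open>z \<le> \<beta>\<close>] e(2) by fastforce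
qed

lemma alternating_sign_exists:
  fixes f :: "real \<Rightarrow> real"
  assumes "finite Z" "\<alpha> \<le> \<beta>" "continuous_on {\<alpha>..\<beta>} f" "\<And>s. s \<in> {\<alpha>..\<beta>} \<Longrightarrow> f s = 0 \<Longrightarrow> s \<in> Z"
  shows "\<exists>L c. alternating_sign f \<alpha> \<beta> L c \<and> length L \<le> card (Z \<inter> {\<alpha><..<\<beta>})"
  using assms(2-)
proof (induction "card (Z \<inter> {\<alpha><..<\<beta>})" arbitrary: \<beta> rule: less_induct)
  case less
  note \<alpha>\<beta> = less.prems(1) and cont = less.prems(2) and zeros = less.prems(3)
  show ?case
  proof (cases "Z \<inter> {\<alpha><..<\<beta>} = {}")
    case True
    have "\<exists>e\<in>{-1,1::real}. \<forall>s\<in>{\<alpha>..\<beta>}. 0 \<le> e * f s"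
    proof (rule continuous_nonvanishing_const_sign[OF \<alpha>\<beta> cont])
      show "f s \<noteq> 0" if "\<alpha> < s" "s < \<beta>" for s
        using that True zeros[of s] by auto
    qed
    then obtain e where "e \<in> {-1, 1}" "\<forall>s\<in>{\<alpha>..\<beta>}. 0 \<le> e * f s" by blast
    then have "alternating_sign f \<alpha> \<beta> [] e"
      by (simp add: alternating_sign_def partition_point_def)
    then show ?thesis by auto
  next
    case False
    have fin: "finite (Z \<inter> {\<alpha><..<\<beta>})" using assms(1) by simp
    define z where "z = Max (Z \<inter> {\<alpha><..<\<beta>})"
    have z: "z \<in> Z" "\<alpha> < z" "z < \<beta>" and z_max: "\<And>s. s \<in> Z \<inter> {\<alpha><..<\<beta>} \<Longrightarrow> s \<le> z"
      unfolding z_def using Max_in[OF fin False] Max_ge[OF fin] by auto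
    then have "Z \<inter> {\<alpha><..<z} \<subset> Z \<inter> {\<alpha><..<\<beta>}" by auto
    then have card_less: "card (Z \<inter> {\<alpha><..<z}) < card (Z \<inter> {\<alpha><..<\<beta>})"
      by (rule psubset_card_mono[OF fin])
    have "\<exists>L c. alternating_sign f \<alpha> z L c \<and> length L \<le> card (Z \<inter> {\<alpha><..<z})"
      using z zeros by (intro less.hyps[OF card_less]) (auto intro: continuous_on_subset[OF cont])
    then obtain L c where L: "alternating_sign f \<alpha> z L c" "length L \<le> card (Z \<inter> {\<alpha><..<z})"
      by blast
    have "\<exists>e\<in>{-1,1::real}. \<forall>s\<in>{z..\<beta>}. 0 \<le> e * f s"
    proof (rule continuous_nonvanishing_const_sign)
      show "continuous_on {z..\<beta>} f" using z by (auto intro: continuous_on_subset[OF cont])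
      show "f s \<noteq> 0" if "z < s" "s < \<beta>" for s
        using that z zeros[of s] z_max[of s] by force
    qed (use z in simp)
    then obtain e where "e \<in> {-1, 1}" "\<And>s. s \<in> {z..\<beta>} \<Longrightarrow> 0 \<le> e * f s" by blast
    then obtain L' where "alternating_sign f \<alpha> \<beta> L' c" "length L' \<le> Suc (length L)"
      using alternating_sign_extend[OF L(1)] z by (meson less_imp_le)
    moreover have "Suc (length L) \<le> card (Z \<inter> {\<alpha><..<\<beta>})"
      using L(2) card_less by simp
    ultimately show ?thesis by (intro exI[of _ L'] exI[of _ c]) simp
  qed
qed

lemma partition_point_mono:
  assumes "sorted L" "set L \<subseteq> {\<alpha>..\<beta>}" "\<alpha> \<le> \<beta>"
  shows "partition_point \<alpha> \<beta> L i \<le> partition_point \<alpha> \<beta> L (Suc i)"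
proof -
  have L_range: "L ! j \<in> {\<alpha>..\<beta>}" if "j < length L" for j using assms(2) that nth_mem by blast
  consider "i = 0" | "0 < i" "Suc i \<le> length L" | "0 < i" "length L < Suc i" by linarith
  then show ?thesis
  proof cases
    case 1
    then show ?thesis using L_range[of 0] assms(3) by (auto simp: partition_point_def Suc_le_eq)
  next
    case 2
    then have "L ! (i - 1) \<le> L ! i" using assms(1) by (intro sorted_nth_mono) auto
    then show ?thesis using 2 by (auto simp: partition_point_def)
  next
    case 3
    then show ?thesis using L_range[of "i - 1"] by (auto simp: partition_point_def)
  qed
qed

lemma sig_ext_mono:
  assumes "\<sigma> \<in> Wset n t" "i \<le> j" "j \<le> n"
  shows "sig_ext n t \<sigma> i \<le> sig_ext n t \<sigma> j"
proof (rule lift_Suc_mono_le_ivl[where N="{..<n}"])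
  show "sig_ext n t \<sigma> k \<le> sig_ext n t \<sigma> (Suc k)" if "k \<in> {..<n}" for k
    using assms(1) that unfolding Wset_def by simp
qed (use assms in auto)

lemma sig_ext_in_Icc:
  assumes "\<sigma> \<in> Wset n t" "i \<le> n" "0 \<le> t"
  shows "sig_ext n t \<sigma> i \<in> {0..t}"
proof -
  have "sig_ext n t \<sigma> 0 \<le> sig_ext n t \<sigma> i" "sig_ext n t \<sigma> i \<le> sig_ext n t \<sigma> n"
    using assms by (auto intro: sig_ext_mono)
  then show ?thesis using assms(3) by (auto simp: sig_ext_def split: if_splits)
qed

lemma kernel_poly_alternating_switches:
  assumes "\<exists>k<n. \<eta> k \<noteq> 0" "0 \<le> t"
  shows "\<exists>\<sigma>\<in>Wset n t. \<exists>c\<in>{-1,1}. \<forall>i<n. sig_ext n t \<sigma> i < sig_ext n t \<sigma> (Suc i) \<longrightarrow>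
           (\<forall>s\<in>{sig_ext n t \<sigma> i..sig_ext n t \<sigma> (Suc i)}. 0 \<le> c * (-1) ^ i * kernel_poly n t \<eta> s)"
proof -
  define Z where "Z = {s. kernel_poly n t \<eta> s = 0}"
  obtain L c where alt: "alternating_sign (kernel_poly n t \<eta>) 0 t L c"
    and len: "length L \<le> card (Z \<inter> {0<..<t})"
    using alternating_sign_exists[of Z 0 t "kernel_poly n t \<eta>"] kernel_poly_zeros(1)[OF assms(1)] assms(2)
    by (auto simp: Z_def intro: continuous_on_kernel_poly)
  have "card (Z \<inter> {0<..<t}) \<le> card Z"
    using kernel_poly_zeros(1)[OF assms(1)] by (intro card_mono) (auto simp: Z_def)
  with len kernel_poly_zeros(2)[OF assms(1), of t] have "length L \<le> n - 1"
    by (simp add: Z_def)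
  then have len_n: "length L < n" using assms(1) by auto
  define \<sigma> where "\<sigma> = vec (n - 1) (\<lambda>j. if j < length L then L ! j else t)"
  have sig_pp: "sig_ext n t \<sigma> i = partition_point 0 t L i" if "i \<le> n" for i
    using that len_n by (auto simp: sig_ext_def partition_point_def \<sigma>_def)
  have L: "sorted L" "set L \<subseteq> {0..t}" "c \<in> {-1, 1}"
    and sign: "\<And>i s. i \<le> length L \<Longrightarrow> s \<in> {partition_point 0 t L i..partition_point 0 t L (Suc i)} \<Longrightarrow>
        0 \<le> c * (-1) ^ i * kernel_poly n t \<eta> s"
    using alt unfolding alternating_sign_def by auto
  have "\<sigma> \<in> Wset n t"
    using partition_point_mono[OF L(1,2) assms(2)] sig_pp by (simp add: Wset_def \<sigma>_def)
  moreover have "0 \<le> c * (-1) ^ i * kernel_poly n t \<eta> s"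
    if "i < n" "sig_ext n t \<sigma> i < sig_ext n t \<sigma> (Suc i)"
       "s \<in> {sig_ext n t \<sigma> i..sig_ext n t \<sigma> (Suc i)}" for i s
  proof -
    have "i \<le> length L"
      using that sig_pp[of i] sig_pp[of "Suc i"] by (auto simp: partition_point_def split: if_splits)
    then show ?thesis using sign that sig_pp[of i] sig_pp[of "Suc i"] by simp
  qed
  ultimately show ?thesis using L(3) by blast
qed

lemma integral_consecutive_intervals:
  fixes F :: "real \<Rightarrow> real"
  assumes "\<And>i. i < m \<Longrightarrow> S i \<le> S (Suc i)" "continuous_on {S 0..S m} F"
  shows "(\<Sum>i<m. integral {S i..S (Suc i)} F) = integral {S 0..S m} F"
  using assms
proof (induction m)
  case (Suc m)
  have le: "S 0 \<le> S m" "S m \<le> S (Suc m)"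
    using Suc.prems(1) lift_Suc_mono_le_ivl[of "{..<Suc m}" S 0 m] by (auto simp: subset_eq)
  then have "continuous_on {S 0..S m} F" using Suc.prems(2) by (auto elim: continuous_on_subset)
  then have "(\<Sum>i<Suc m. integral {S i..S (Suc i)} F) = integral {S 0..S m} F + integral {S m..S (Suc m)} F"
    using Suc by simp
  also have "\<dots> = integral {S 0..S (Suc m)} F"
    using le Suc.prems(2) by (intro Henstock_Kurzweil_Integration.integral_combine integrable_continuous_interval) auto
  finally show ?case .
qed simp

lemma integral_split_sig_ext:
  fixes F :: "real \<Rightarrow> real"
  assumes "\<sigma> \<in> Wset n t" "0 < n" "continuous_on UNIV F"
  shows "integral {0..t} F = (\<Sum>i<n. integral {sig_ext n t \<sigma> i..sig_ext n t \<sigma> (Suc i)} F)"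
proof -
  have "sig_ext n t \<sigma> 0 = 0" "sig_ext n t \<sigma> n = t" using assms(2) by (simp_all add: sig_ext_def)
  moreover have "(\<Sum>i<n. integral {sig_ext n t \<sigma> i..sig_ext n t \<sigma> (Suc i)} F)
      = integral {sig_ext n t \<sigma> 0..sig_ext n t \<sigma> n} F"
    using sig_ext_mono[OF assms(1)] assms(3)
    by (intro integral_consecutive_intervals) (auto intro: continuous_on_subset)
  ultimately show ?thesis by simp
qed

lemma bounded_coordinates_convergent_subseq:
  fixes f :: "nat \<Rightarrow> nat \<Rightarrow> real"
  assumes "\<And>j k. k < m \<Longrightarrow> \<bar>f j k\<bar> \<le> B"
  shows "\<exists>r l. strict_mono r \<and> (\<forall>k<m. (\<lambda>j. f (r j) k) \<longlonglongrightarrow> l k)"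
  using assms
proof (induction m)
  case 0
  show ?case by (rule exI[of _ id]) (auto simp: strict_mono_def)
next
  case (Suc m)
  then obtain r1 l1 where r1: "strict_mono r1" "\<forall>k<m. (\<lambda>j. f (r1 j) k) \<longlonglongrightarrow> l1 k"
    by (metis less_SucI)
  have "\<forall>j. f (r1 j) m \<in> {-B..B}" using Suc.prems[of m] by (auto simp: abs_le_iff minus_le_iff)
  then obtain l' r2 where r2: "strict_mono r2" "((\<lambda>j. f (r1 j) m) \<circ> r2) \<longlonglongrightarrow> l'"
    using seq_compactE[OF compact_imp_seq_compact[OF compact_Icc]] by metis
  have "(\<lambda>j. f ((r1 \<circ> r2) j) k) \<longlonglongrightarrow> (l1(m := l')) k" if "k < Suc m" for k
  proof (cases "k = m")
    case True
    then show ?thesis using r2(2) by (simp add: o_def)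
  next
    case False
    then have "(\<lambda>j. f (r1 j) k) \<longlonglongrightarrow> l1 k" using r1(2) that by simp
    from LIMSEQ_subseq_LIMSEQ[OF this r2(1)] show ?thesis using False by (simp add: o_def)
  qed
  moreover have "strict_mono (r1 \<circ> r2)" using r1(1) r2(1) by (rule strict_mono_o)
  ultimately show ?case by blast
qed

lemma continuous_imp_integrable_Icc:
  fixes f :: "real \<Rightarrow> real"
  shows "continuous_on UNIV f \<Longrightarrow> f integrable_on {x..y}"
  by (intro integrable_continuous_interval) (auto elim: continuous_on_subset)

lemma abs_add_le_sign_excess:
  fixes x y e \<epsilon> K :: real
  assumes "e \<in> {-1, 1}" "0 \<le> e * x" "0 < \<epsilon>" "\<epsilon> * K = 1"
  shows "\<bar>x + \<epsilon> * y\<bar> \<le> \<bar>x\<bar> + \<epsilon> * (e * y) + 2 * \<epsilon> * max 0 (\<bar>y\<bar> - K * \<bar>x\<bar>)"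
proof -
  have "\<epsilon> * max 0 (\<bar>y\<bar> - K * \<bar>x\<bar>) = max 0 (\<bar>\<epsilon> * y\<bar> - \<bar>x\<bar>)"
    using assms(3,4) by (simp add: max_mult_distrib_left right_diff_distrib abs_mult mult.assoc[symmetric])
  moreover have "\<bar>x + \<epsilon> * y\<bar> \<le> \<bar>x\<bar> + e * (\<epsilon> * y) + 2 * max 0 (\<bar>\<epsilon> * y\<bar> - \<bar>x\<bar>)"
    using assms(1,2) by (auto simp: abs_if max_def)
  ultimately show ?thesis by (simp add: algebra_simps)
qed

lemma integral_abs_perturb_le:
  fixes mu a g :: "real \<Rightarrow> real"
  assumes "continuous_on UNIV mu" "continuous_on UNIV a" "continuous_on UNIV g"
    and "e \<in> {-1, 1}" "\<And>s. s \<in> {x..y} \<Longrightarrow> 0 \<le> e * a s" "\<And>s. s \<in> {x..y} \<Longrightarrow> 0 \<le> mu s"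
    and "0 < \<epsilon>" "\<epsilon> * K = 1"
  shows "integral {x..y} (\<lambda>s. mu s * \<bar>a s + \<epsilon> * g s\<bar>)
      \<le> integral {x..y} (\<lambda>s. mu s * \<bar>a s\<bar>) + \<epsilon> * e * integral {x..y} (\<lambda>s. mu s * g s)
         + 2 * \<epsilon> * integral {x..y} (\<lambda>s. mu s * max 0 (\<bar>g s\<bar> - K * \<bar>a s\<bar>))"
proof -
  let ?A = "\<lambda>s. mu s * \<bar>a s\<bar>" and ?G = "\<lambda>s. mu s * g s"
    and ?E = "\<lambda>s. mu s * max 0 (\<bar>g s\<bar> - K * \<bar>a s\<bar>)"
  have integrable: "?A integrable_on {x..y}" "(\<lambda>s. c * ?G s) integrable_on {x..y}"
    "(\<lambda>s. c * ?E s) integrable_on {x..y}" "(\<lambda>s. mu s * \<bar>a s + \<epsilon> * g s\<bar>) integrable_on {x..y}" for c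
    by (intro continuous_imp_integrable_Icc continuous_intros assms(1-3))+
  have "integral {x..y} (\<lambda>s. mu s * \<bar>a s + \<epsilon> * g s\<bar>)
      \<le> integral {x..y} (\<lambda>s. ?A s + (\<epsilon> * e) * ?G s + (2 * \<epsilon>) * ?E s)"
  proof (intro integral_le ballI)
    fix s assume s: "s \<in> {x..y}"
    from mult_left_mono[OF abs_add_le_sign_excess[where y = "g s", OF assms(4) assms(5)[OF s] assms(7,8)] assms(6)[OF s]]
    show "mu s * \<bar>a s + \<epsilon> * g s\<bar> \<le> ?A s + (\<epsilon> * e) * ?G s + (2 * \<epsilon>) * ?E s"
      by (simp add: algebra_simps)
  qed (use integrable in \<open>auto intro!: integrable_add\<close>)
  also have "\<dots> = integral {x..y} ?A + integral {x..y} (\<lambda>s. (\<epsilon> * e) * ?G s) + integral {x..y} (\<lambda>s. (2 * \<epsilon>) * ?E s)"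
    using integrable by (simp add: integral_add integrable_add)
  finally show ?thesis by (simp add: mult.assoc)
qed

lemma excess_integral_tendsto_zero:
  fixes mu a g :: "real \<Rightarrow> real"
  assumes "finite {s. a s = 0}" "continuous_on UNIV mu" "continuous_on UNIV a" "continuous_on UNIV g"
  shows "(\<lambda>j. integral {x..y} (\<lambda>s. mu s * max 0 (\<bar>g s\<bar> - real j * \<bar>a s\<bar>))) \<longlonglongrightarrow> 0"
proof -
  define g0 where "g0 s = (if a s = 0 then mu s * \<bar>g s\<bar> else 0)" for s
  have "(\<lambda>j. integral {x..y} (\<lambda>s. mu s * max 0 (\<bar>g s\<bar> - real j * \<bar>a s\<bar>))) \<longlonglongrightarrow> integral {x..y} g0"
  proof (rule dominated_convergence(2))
    show "(\<lambda>s. mu s * max 0 (\<bar>g s\<bar> - real j * \<bar>a s\<bar>)) integrable_on {x..y}" for j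
      using assms(2-4) by (intro continuous_imp_integrable_Icc continuous_intros)
    show "(\<lambda>s. \<bar>mu s\<bar> * \<bar>g s\<bar>) integrable_on {x..y}"
      using assms(2-4) by (intro continuous_imp_integrable_Icc continuous_intros)
    show "norm (mu s * max 0 (\<bar>g s\<bar> - real j * \<bar>a s\<bar>)) \<le> \<bar>mu s\<bar> * \<bar>g s\<bar>" for j s
      by (auto simp: abs_mult intro!: mult_left_mono)
    show "(\<lambda>j. mu s * max 0 (\<bar>g s\<bar> - real j * \<bar>a s\<bar>)) \<longlonglongrightarrow> g0 s" for s
    proof (cases "a s = 0")
      case False
      have "eventually (\<lambda>j. \<bar>g s\<bar> / \<bar>a s\<bar> \<le> real j) sequentially"
        by (rule eventually_sequentiallyI[of "nat \<lceil>\<bar>g s\<bar> / \<bar>a s\<bar>\<rceil>"]) linarith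
      then have "eventually (\<lambda>j. mu s * max 0 (\<bar>g s\<bar> - real j * \<bar>a s\<bar>) = g0 s) sequentially"
        by eventually_elim (use False in \<open>simp add: g0_def divide_le_eq\<close>)
      then show ?thesis by (rule tendsto_eventually)
    qed (simp add: g0_def)
  qed
  moreover have "integral {x..y} g0 = 0"
    by (rule integral_unique, rule has_integral_spike_finite[OF assms(1) _ has_integral_0]) (simp add: g0_def)
  ultimately show ?thesis by simp
qed

definition moment :: "nat \<Rightarrow> real \<Rightarrow> (real \<Rightarrow> real) \<Rightarrow> nat \<Rightarrow> real" where
  "moment n t w k = integral {0..t} (\<lambda>s. w s * taylor_kernel n t k s)"

definition moment_pairing :: "nat \<Rightarrow> real \<Rightarrow> (real \<Rightarrow> real) \<Rightarrow> (nat \<Rightarrow> real) \<Rightarrow> real" where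
  "moment_pairing n t w \<eta> = (\<Sum>k<n. \<eta> k * moment n t w k)"

(* The support function of the set of all moment vectors of deviations w with |w| \<le> mu. *)
definition support_integral :: "nat \<Rightarrow> real \<Rightarrow> (real \<Rightarrow> real) \<Rightarrow> (nat \<Rightarrow> real) \<Rightarrow> real" where
  "support_integral n t mu \<eta> = integral {0..t} (\<lambda>s. mu s * \<bar>kernel_poly n t \<eta> s\<bar>)"

definition switching_integral :: "nat \<Rightarrow> real \<Rightarrow> real vec \<Rightarrow> (real \<Rightarrow> real) \<Rightarrow> real" where
  "switching_integral n t \<sigma> g = (\<Sum>i<n. (-1) ^ i * integral {sig_ext n t \<sigma> i..sig_ext n t \<sigma> (Suc i)} g)"

lemma switching_integral_scale:
  "switching_integral n t \<sigma> (\<lambda>s. c * g s) = c * switching_integral n t \<sigma> g"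
  by (simp add: switching_integral_def sum_distrib_left mult_ac)

locale dominated_deviation =
  fixes n :: nat and t :: real and mu w :: "real \<Rightarrow> real"
  assumes t_pos: "0 < t" and continuous_mu: "continuous_on UNIV mu"
    and continuous_w: "continuous_on UNIV w" and abs_w_le: "\<And>s. s \<in> {0..t} \<Longrightarrow> \<bar>w s\<bar> \<le> mu s"
begin

abbreviation pairing :: "(nat \<Rightarrow> real) \<Rightarrow> real" where "pairing \<equiv> moment_pairing n t w"

abbreviation support :: "(nat \<Rightarrow> real) \<Rightarrow> real" where "support \<equiv> support_integral n t mu"

lemma mu_nonneg: "s \<in> {0..t} \<Longrightarrow> 0 \<le> mu s"
  using abs_w_le[of s] by linarith

lemma integrable_mu_kernel_poly [intro]: "(\<lambda>s. mu s * \<bar>kernel_poly n t \<eta> s\<bar>) integrable_on {x..y}"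
  by (intro continuous_imp_integrable_Icc continuous_intros continuous_mu)

lemma pairing_eq_integral: "pairing \<eta> = integral {0..t} (\<lambda>s. w s * kernel_poly n t \<eta> s)"
proof -
  have "integral {0..t} (\<lambda>s. w s * kernel_poly n t \<eta> s)
      = integral {0..t} (\<lambda>s. \<Sum>k<n. \<eta> k * (w s * taylor_kernel n t k s))"
    by (simp add: kernel_poly_def sum_distrib_left mult_ac)
  also have "\<dots> = (\<Sum>k<n. integral {0..t} (\<lambda>s. \<eta> k * (w s * taylor_kernel n t k s)))"
    by (intro integral_sum continuous_imp_integrable_Icc continuous_intros continuous_w) simp
  finally show ?thesis by (simp add: moment_pairing_def moment_def)
qed

lemma pairing_le_support: "pairing \<eta> \<le> support \<eta>"
  unfolding pairing_eq_integral support_integral_def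
proof (rule integral_le)
  show "(\<lambda>s. w s * kernel_poly n t \<eta> s) integrable_on {0..t}"
    by (intro continuous_imp_integrable_Icc continuous_intros continuous_w)
  fix s assume s: "s \<in> {0..t}"
  have "w s * kernel_poly n t \<eta> s \<le> \<bar>w s\<bar> * \<bar>kernel_poly n t \<eta> s\<bar>" by (metis abs_ge_self abs_mult)
  also have "\<dots> \<le> mu s * \<bar>kernel_poly n t \<eta> s\<bar>" using abs_w_le[OF s] by (intro mult_right_mono) auto
  finally show "w s * kernel_poly n t \<eta> s \<le> mu s * \<bar>kernel_poly n t \<eta> s\<bar>" .
qed auto

lemma support_nonneg: "0 \<le> support \<eta>"
  unfolding support_integral_def using mu_nonneg by (intro integral_nonneg) auto

lemma support_scale: "support (\<lambda>k. c * \<eta> k) = \<bar>c\<bar> * support \<eta>"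
  by (simp add: support_integral_def kernel_poly_scale abs_mult mult_ac)

lemma support_le_add:
  "support \<eta> \<le> support \<eta>' + (\<Sum>k<n. \<bar>\<eta> k - \<eta>' k\<bar> * integral {0..t} (\<lambda>s. mu s * \<bar>taylor_kernel n t k s\<bar>))"
proof -
  let ?D = "\<lambda>s. \<Sum>k<n. \<bar>\<eta> k - \<eta>' k\<bar> * (mu s * \<bar>taylor_kernel n t k s\<bar>)"
  have integrable_D: "?D integrable_on {0..t}"
    by (intro continuous_imp_integrable_Icc continuous_intros continuous_mu)
  have "support \<eta> \<le> integral {0..t} (\<lambda>s. mu s * \<bar>kernel_poly n t \<eta>' s\<bar> + ?D s)"
    unfolding support_integral_def
  proof (intro integral_le ballI)
    show "(\<lambda>s. mu s * \<bar>kernel_poly n t \<eta>' s\<bar> + ?D s) integrable_on {0..t}"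
      using integrable_D by (intro integrable_add) auto
    fix s assume s: "s \<in> {0..t}"
    have "kernel_poly n t \<eta> s = kernel_poly n t \<eta>' s + (\<Sum>k<n. (\<eta> k - \<eta>' k) * taylor_kernel n t k s)"
      by (simp add: kernel_poly_def algebra_simps sum_subtractf)
    then have "\<bar>kernel_poly n t \<eta> s\<bar> \<le> \<bar>kernel_poly n t \<eta>' s\<bar> + (\<Sum>k<n. \<bar>\<eta> k - \<eta>' k\<bar> * \<bar>taylor_kernel n t k s\<bar>)"
      using sum_abs[of "\<lambda>k. (\<eta> k - \<eta>' k) * taylor_kernel n t k s" "{..<n}"] by (simp add: abs_mult)
    from mult_left_mono[OF this mu_nonneg[OF s]]
    show "mu s * \<bar>kernel_poly n t \<eta> s\<bar> \<le> mu s * \<bar>kernel_poly n t \<eta>' s\<bar> + ?D s"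
      by (simp add: algebra_simps sum_distrib_left)
  qed auto
  also have "\<dots> = support \<eta>' + integral {0..t} ?D"
    unfolding support_integral_def using integrable_D by (intro integral_add) auto
  also have "integral {0..t} ?D = (\<Sum>k<n. \<bar>\<eta> k - \<eta>' k\<bar> * integral {0..t} (\<lambda>s. mu s * \<bar>taylor_kernel n t k s\<bar>))"
  proof -
    have "(\<lambda>s. \<bar>\<eta> k - \<eta>' k\<bar> * (mu s * \<bar>taylor_kernel n t k s\<bar>)) integrable_on {0..t}" for k
      by (intro continuous_imp_integrable_Icc continuous_intros continuous_mu)
    then show ?thesis by (subst integral_sum) auto
  qed
  finally show ?thesis .
qed

lemma support_lipschitz:
  "\<bar>support \<eta> - support \<eta>'\<bar> \<le> (\<Sum>k<n. \<bar>\<eta> k - \<eta>' k\<bar> * integral {0..t} (\<lambda>s. mu s * \<bar>taylor_kernel n t k s\<bar>))"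
  using support_le_add[of \<eta> \<eta>'] support_le_add[of \<eta>' \<eta>] by (simp add: abs_minus_commute)

lemma pairing_le_scaled_support:
  assumes sphere: "\<And>\<eta>. (\<Sum>k<n. \<bar>\<eta> k\<bar>) = 1 \<Longrightarrow> 0 < support \<eta> \<Longrightarrow> pairing \<eta> \<le> R * support \<eta>"
  shows "pairing \<eta> \<le> R * support \<eta>"
proof (cases "support \<eta> = 0")
  case True
  then show ?thesis using pairing_le_support[of \<eta>] by simp
next
  case False
  then have pos: "0 < support \<eta>" using support_nonneg[of \<eta>] by simp
  define N where "N = (\<Sum>k<n. \<bar>\<eta> k\<bar>)"
  have "N \<noteq> 0"
  proof
    assume "N = 0"
    then have "\<forall>k<n. \<eta> k = 0" unfolding N_def by (subst (asm) sum_nonneg_eq_0_iff) auto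
    then have "support \<eta> = 0" by (simp add: support_integral_def kernel_poly_def)
    with pos show False by simp
  qed
  then have N: "0 < N" unfolding N_def by (simp add: order_le_neq_trans sum_nonneg)
  define \<eta>' where "\<eta>' = (\<lambda>k. inverse N * \<eta> k)"
  have "support \<eta>' = inverse N * support \<eta>" "pairing \<eta>' = inverse N * pairing \<eta>"
    using N by (simp_all add: \<eta>'_def support_scale moment_pairing_def sum_distrib_left mult.assoc)
  moreover have "(\<Sum>k<n. \<bar>\<eta>' k\<bar>) = 1"
    using N by (simp add: \<eta>'_def abs_mult sum_distrib_left[symmetric] N_def[symmetric])
  ultimately have "inverse N * pairing \<eta> \<le> R * (inverse N * support \<eta>)"
    using sphere[of \<eta>'] pos N by simp
  also have "\<dots> = inverse N * (R * support \<eta>)" by (rule mult.left_commute)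
  finally show ?thesis using N by simp
qed

lemma support_ratio_exists:
  assumes "k0 < n" "moment n t w k0 \<noteq> 0"
  shows "\<exists>R. 0 < R \<and> R \<le> 1 \<and> (\<forall>\<eta>. pairing \<eta> \<le> R * support \<eta>) \<and>
           (\<forall>\<epsilon>>0. \<exists>\<eta>. (\<Sum>k<n. \<bar>\<eta> k\<bar>) = 1 \<and> (R - \<epsilon>) * support \<eta> \<le> pairing \<eta>)"
proof -
  define ratio where "ratio \<eta> = pairing \<eta> / support \<eta>" for \<eta>
  define Sph where "Sph = {\<eta>. (\<Sum>k<n. \<bar>\<eta> k\<bar>) = 1 \<and> 0 < support \<eta>}"
  define R where "R = Sup (ratio ` Sph)"
  define p where "p = moment n t w k0"
  define e0 where "e0 = (\<lambda>k. if k = k0 then sgn p else 0)"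
  have "pairing e0 = (\<Sum>k<n. if k = k0 then sgn p * p else 0)"
    unfolding moment_pairing_def e0_def p_def by (intro sum.cong) auto
  moreover have "(\<Sum>k<n. \<bar>e0 k\<bar>) = (\<Sum>k<n. if k = k0 then \<bar>sgn p\<bar> else 0)"
    unfolding e0_def by (intro sum.cong) auto
  ultimately have "pairing e0 = sgn p * p" "(\<Sum>k<n. \<bar>e0 k\<bar>) = 1"
    using assms by (simp_all add: p_def)
  moreover have "0 < sgn p * p" using assms(2) by (auto simp: p_def sgn_if)
  ultimately have e0: "e0 \<in> Sph" "0 < ratio e0"
    using pairing_le_support[of e0] by (auto simp: Sph_def ratio_def)
  have ratio_le1: "ratio \<eta> \<le> 1" if "\<eta> \<in> Sph" for \<eta>
    using that pairing_le_support[of \<eta>] by (simp add: Sph_def ratio_def)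
  have bdd: "bdd_above (ratio ` Sph)" using ratio_le1 by (intro bdd_aboveI[of _ 1]) auto
  have "ratio e0 \<le> R" unfolding R_def using bdd e0 by (intro cSup_upper) auto
  then have "0 < R" using e0 by simp
  moreover have "R \<le> 1" unfolding R_def using e0 ratio_le1 by (intro cSup_least) auto
  moreover have "pairing \<eta> \<le> R * support \<eta>" for \<eta>
  proof (rule pairing_le_scaled_support)
    fix \<eta> assume "(\<Sum>k<n. \<bar>\<eta> k\<bar>) = 1" "0 < support \<eta>"
    then have "ratio \<eta> \<le> R" unfolding R_def using bdd by (intro cSup_upper) (auto simp: Sph_def)
    then show "pairing \<eta> \<le> R * support \<eta>" using \<open>0 < support \<eta>\<close> by (simp add: ratio_def pos_divide_le_eq)
  qed
  moreover have "\<exists>\<eta>. (\<Sum>k<n. \<bar>\<eta> k\<bar>) = 1 \<and> (R - \<epsilon>) * support \<eta> \<le> pairing \<eta>" if "0 < \<epsilon>" for \<epsilon>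
  proof -
    have "\<exists>r\<in>ratio ` Sph. R - \<epsilon> < r"
      unfolding R_def using e0 that by (intro less_cSupD) auto
    then obtain \<eta> where "\<eta> \<in> Sph" "R - \<epsilon> < ratio \<eta>" by blast
    then show ?thesis by (intro exI[of _ \<eta>]) (auto simp: Sph_def ratio_def pos_less_divide_eq less_imp_le)
  qed
  ultimately show ?thesis by blast
qed

lemma support_ratio_attained:
  assumes "\<forall>\<epsilon>>0. \<exists>\<eta>. (\<Sum>k<n. \<bar>\<eta> k\<bar>) = 1 \<and> (R - \<epsilon>) * support \<eta> \<le> pairing \<eta>"
  shows "\<exists>l. (\<Sum>k<n. \<bar>l k\<bar>) = 1 \<and> R * support l \<le> pairing l"
proof -
  have "\<forall>j. \<exists>\<eta>. (\<Sum>k<n. \<bar>\<eta> k\<bar>) = 1 \<and> (R - inverse (real (Suc j))) * support \<eta> \<le> pairing \<eta>"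
    using assms by simp
  then obtain \<eta>s where \<eta>s: "\<And>j. (\<Sum>k<n. \<bar>\<eta>s j k\<bar>) = 1"
    "\<And>j. (R - inverse (real (Suc j))) * support (\<eta>s j) \<le> pairing (\<eta>s j)"
    by metis
  have "\<bar>\<eta>s j k\<bar> \<le> 1" if "k < n" for j k
    using that member_le_sum[of k "{..<n}" "\<lambda>k. \<bar>\<eta>s j k\<bar>"] \<eta>s(1)[of j] by simp
  then obtain r l where r: "strict_mono r" and lim: "\<And>k. k < n \<Longrightarrow> (\<lambda>j. \<eta>s (r j) k) \<longlonglongrightarrow> l k"
    using bounded_coordinates_convergent_subseq[of n \<eta>s 1] by blast
  have "(\<lambda>j. \<Sum>k<n. \<bar>\<eta>s (r j) k\<bar>) \<longlonglongrightarrow> (\<Sum>k<n. \<bar>l k\<bar>)"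
    by (intro tendsto_sum tendsto_rabs lim) simp
  then have "(\<Sum>k<n. \<bar>l k\<bar>) = 1" unfolding \<eta>s(1) by (simp add: LIMSEQ_const_iff)
  moreover have "R * support l \<le> pairing l"
  proof (rule tendsto_le[OF trivial_limit_sequentially])
    show "(\<lambda>j. pairing (\<eta>s (r j))) \<longlonglongrightarrow> pairing l"
      unfolding moment_pairing_def by (intro tendsto_sum tendsto_mult tendsto_const lim) simp
    have "(\<lambda>j. \<Sum>k<n. \<bar>\<eta>s (r j) k - l k\<bar> * integral {0..t} (\<lambda>s. mu s * \<bar>taylor_kernel n t k s\<bar>)) \<longlonglongrightarrow> 0"
    proof (rule tendsto_null_sum)
      fix k assume "k \<in> {..<n}"
      then have "(\<lambda>j. \<bar>\<eta>s (r j) k - l k\<bar>) \<longlonglongrightarrow> \<bar>l k - l k\<bar>" by (intro tendsto_intros lim) simp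
      then show "(\<lambda>j. \<bar>\<eta>s (r j) k - l k\<bar> * integral {0..t} (\<lambda>s. mu s * \<bar>taylor_kernel n t k s\<bar>)) \<longlonglongrightarrow> 0"
        by (intro tendsto_mult_left_zero) simp
    qed
    then have "(\<lambda>j. support (\<eta>s (r j)) - support l) \<longlonglongrightarrow> 0"
      by (rule Lim_null_comparison[rotated]) (simp add: support_lipschitz)
    then have "(\<lambda>j. support (\<eta>s (r j))) \<longlonglongrightarrow> support l" by (rule LIM_zero_cancel)
    moreover have "(\<lambda>j. R - inverse (real (Suc (r j)))) \<longlonglongrightarrow> R - 0"
      using LIMSEQ_subseq_LIMSEQ[OF LIMSEQ_inverse_real_of_nat r] by (intro tendsto_diff) (simp_all add: o_def)
    ultimately show "(\<lambda>j. (R - inverse (real (Suc (r j)))) * support (\<eta>s (r j))) \<longlonglongrightarrow> R * support l"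
      using tendsto_mult by fastforce
  qed (use \<eta>s(2) in simp)
  ultimately show ?thesis by blast
qed

end

locale extremal_direction = dominated_deviation +
  fixes R :: real and l :: "nat \<Rightarrow> real" and \<sigma> :: "real vec" and c :: real
  assumes R_nonneg: "0 \<le> R" and pairing_le: "\<And>\<eta>. pairing \<eta> \<le> R * support \<eta>"
    and extremal: "R * support l \<le> pairing l" and l_nonzero: "\<exists>k<n. l k \<noteq> 0"
    and \<sigma>_Wset: "\<sigma> \<in> Wset n t" and c_sign: "c \<in> {-1, 1}"
    and alternating: "\<And>i s. i < n \<Longrightarrow> sig_ext n t \<sigma> i < sig_ext n t \<sigma> (Suc i) \<Longrightarrow>
        s \<in> {sig_ext n t \<sigma> i..sig_ext n t \<sigma> (Suc i)} \<Longrightarrow> 0 \<le> c * (-1) ^ i * kernel_poly n t l s"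
begin

lemma n_pos: "0 < n"
  using l_nonzero by auto

lemma support_perturb_le:
  assumes \<epsilon>: "0 < \<epsilon>" "\<epsilon> * K = 1"
  shows "support (\<lambda>k. l k + \<epsilon> * d k) \<le> support l
           + \<epsilon> * c * switching_integral n t \<sigma> (\<lambda>s. mu s * kernel_poly n t d s)
           + 2 * \<epsilon> * integral {0..t} (\<lambda>s. mu s * max 0 (\<bar>kernel_poly n t d s\<bar> - K * \<bar>kernel_poly n t l s\<bar>))"
proof -
  let ?S = "sig_ext n t \<sigma>" and ?a = "kernel_poly n t l" and ?g = "kernel_poly n t d"
  let ?A = "\<lambda>s. mu s * \<bar>?a s\<bar>" and ?G = "\<lambda>s. mu s * ?g s"
    and ?E = "\<lambda>s. mu s * max 0 (\<bar>?g s\<bar> - K * \<bar>?a s\<bar>)"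
  have interval: "integral {?S i..?S (Suc i)} (\<lambda>s. mu s * \<bar>?a s + \<epsilon> * ?g s\<bar>)
      \<le> integral {?S i..?S (Suc i)} ?A + \<epsilon> * (c * (-1) ^ i) * integral {?S i..?S (Suc i)} ?G
         + 2 * \<epsilon> * integral {?S i..?S (Suc i)} ?E" if i: "i < n" for i
  proof (cases "?S i < ?S (Suc i)")
    case True
    have "{?S i..?S (Suc i)} \<subseteq> {0..t}"
      using sig_ext_in_Icc[OF \<sigma>_Wset, of i] sig_ext_in_Icc[OF \<sigma>_Wset, of "Suc i"] i t_pos by auto
    moreover have "c * (-1) ^ i \<in> {-1, 1::real}" using c_sign by (cases "even i") auto
    ultimately show ?thesis
      using alternating[OF i True] mu_nonneg
      by (intro integral_abs_perturb_le \<epsilon> continuous_intros continuous_mu) auto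
  next
    case False
    then have "?S i = ?S (Suc i)" using sig_ext_mono[OF \<sigma>_Wset, of i "Suc i"] i by simp
    then show ?thesis by simp
  qed
  have cont_A: "continuous_on UNIV ?A" and cont_E: "continuous_on UNIV ?E"
    by (intro continuous_intros continuous_mu)+
  have "support (\<lambda>k. l k + \<epsilon> * d k) = (\<Sum>i<n. integral {?S i..?S (Suc i)} (\<lambda>s. mu s * \<bar>?a s + \<epsilon> * ?g s\<bar>))"
    unfolding support_integral_def kernel_poly_add_scaled
    by (intro integral_split_sig_ext[OF \<sigma>_Wset n_pos] continuous_intros continuous_mu)
  also have "\<dots> \<le> (\<Sum>i<n. integral {?S i..?S (Suc i)} ?A + \<epsilon> * (c * (-1) ^ i) * integral {?S i..?S (Suc i)} ?G
         + 2 * \<epsilon> * integral {?S i..?S (Suc i)} ?E)"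
    by (intro sum_mono interval) simp
  also have "\<dots> = support l + \<epsilon> * c * switching_integral n t \<sigma> ?G + 2 * \<epsilon> * integral {0..t} ?E"
    using integral_split_sig_ext[OF \<sigma>_Wset n_pos cont_A] integral_split_sig_ext[OF \<sigma>_Wset n_pos cont_E]
    by (simp add: support_integral_def switching_integral_def sum.distrib sum_distrib_left mult_ac)
  finally show ?thesis .
qed

lemma pairing_le_switching:
  shows "pairing d \<le> R * c * switching_integral n t \<sigma> (\<lambda>s. mu s * kernel_poly n t d s)"
proof -
  let ?T = "switching_integral n t \<sigma> (\<lambda>s. mu s * kernel_poly n t d s)"
  let ?E = "\<lambda>j. integral {0..t} (\<lambda>s. mu s * max 0 (\<bar>kernel_poly n t d s\<bar> - real j * \<bar>kernel_poly n t l s\<bar>))"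
  have bound: "pairing d \<le> R * c * ?T + 2 * R * ?E (Suc j)" for j
  proof -
    define \<epsilon> where "\<epsilon> = inverse (real (Suc j))"
    have \<epsilon>: "0 < \<epsilon>" "\<epsilon> * real (Suc j) = 1" by (simp_all add: \<epsilon>_def)
    have "R * support l + \<epsilon> * pairing d \<le> pairing (\<lambda>k. l k + \<epsilon> * d k)"
      using extremal by (simp add: moment_pairing_def algebra_simps sum.distrib sum_distrib_left)
    also have "\<dots> \<le> R * support (\<lambda>k. l k + \<epsilon> * d k)" by (rule pairing_le)
    also have "\<dots> \<le> R * (support l + \<epsilon> * c * ?T + 2 * \<epsilon> * ?E (Suc j))"
      using support_perturb_le[OF \<epsilon>] R_nonneg by (intro mult_left_mono) auto
    finally have "\<epsilon> * pairing d \<le> \<epsilon> * (R * c * ?T + 2 * R * ?E (Suc j))"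
      by (simp add: algebra_simps)
    then show ?thesis using \<epsilon>(1) by simp
  qed
  have "?E \<longlonglongrightarrow> 0"
    using kernel_poly_zeros(1)[OF l_nonzero] by (intro excess_integral_tendsto_zero continuous_intros continuous_mu)
  then have "(\<lambda>j. R * c * ?T + 2 * R * ?E (Suc j)) \<longlonglongrightarrow> R * c * ?T + 2 * R * 0"
    by (intro tendsto_intros LIMSEQ_Suc[of ?E])
  with bound show ?thesis
    by (intro tendsto_le[OF trivial_limit_sequentially _ tendsto_const]) (auto intro: always_eventually)
qed

lemma moment_eq_switching:
  assumes k: "k < n"
  shows "moment n t w k = R * c * switching_integral n t \<sigma> (\<lambda>s. mu s * taylor_kernel n t k s)"
proof -
  let ?T = "switching_integral n t \<sigma> (\<lambda>s. mu s * taylor_kernel n t k s)"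
  have "b * moment n t w k \<le> b * (R * c * ?T)" for b
  proof -
    define d where "d j = b * (if j = k then 1 else 0)" for j
    have "pairing d = (\<Sum>j<n. if j = k then b * moment n t w j else 0)"
      unfolding moment_pairing_def d_def by (intro sum.cong) auto
    then have "pairing d = b * moment n t w k" using k by simp
    moreover have "kernel_poly n t d s = b * taylor_kernel n t k s" for s
      unfolding d_def kernel_poly_scale kernel_poly_unit[OF k] ..
    ultimately show ?thesis
      using pairing_le_switching[of d]
      by (simp add: mult.left_commute[of "mu _"] switching_integral_scale mult_ac)
  qed
  from this[of 1] this[of "-1"] show ?thesis by simp
qed

end

context dominated_deviation
begin

lemma moment_bang_bang:
  "\<exists>\<sigma>\<in>Wset n t. \<exists>c\<in>{-1..1}. \<forall>k<n.
     moment n t w k = c * switching_integral n t \<sigma> (\<lambda>s. mu s * taylor_kernel n t k s)"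
proof (cases "\<forall>k<n. moment n t w k = 0")
  case True
  have "vec (n - 1) (\<lambda>_. t) \<in> Wset n t" using t_pos by (auto simp: Wset_def sig_ext_def)
  with True show ?thesis by (intro bexI[of _ "vec (n - 1) (\<lambda>_. t)"] bexI[of _ 0]) auto
next
  case False
  then obtain k0 where k0: "k0 < n" "moment n t w k0 \<noteq> 0" by blast
  obtain R where R: "0 < R" "R \<le> 1" "\<And>\<eta>. pairing \<eta> \<le> R * support \<eta>"
    and approx: "\<forall>\<epsilon>>0. \<exists>\<eta>. (\<Sum>k<n. \<bar>\<eta> k\<bar>) = 1 \<and> (R - \<epsilon>) * support \<eta> \<le> pairing \<eta>"
    using support_ratio_exists[OF k0] by blast
  obtain l where l: "(\<Sum>k<n. \<bar>l k\<bar>) = 1" "R * support l \<le> pairing l"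
    using support_ratio_attained[OF approx] by blast
  have l_nz: "\<exists>k<n. l k \<noteq> 0"
  proof (rule ccontr)
    assume "\<not> (\<exists>k<n. l k \<noteq> 0)"
    then have "(\<Sum>k<n. \<bar>l k\<bar>) = 0" by simp
    with l(1) show False by simp
  qed
  obtain \<sigma> c where \<sigma>: "\<sigma> \<in> Wset n t" and c: "c \<in> {-1, 1}"
    and sign: "\<And>i s. i < n \<Longrightarrow> sig_ext n t \<sigma> i < sig_ext n t \<sigma> (Suc i) \<Longrightarrow>
        s \<in> {sig_ext n t \<sigma> i..sig_ext n t \<sigma> (Suc i)} \<Longrightarrow> 0 \<le> c * (-1) ^ i * kernel_poly n t l s"
    using kernel_poly_alternating_switches[OF l_nz less_imp_le[OF t_pos]] by blast
  interpret extremal_direction n t mu w R l \<sigma> c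
    using R l(2) l_nz \<sigma> c sign by unfold_locales auto
  have "R * c \<in> {-1..1}" using R(1,2) c by auto
  with \<sigma> show ?thesis using moment_eq_switching by blast
qed

end

lemma moment_bang_bang_Icc:
  assumes t: "0 < t" and cont: "continuous_on {0..t} mu" "continuous_on {0..t} w"
    and w_le: "\<And>s. s \<in> {0..t} \<Longrightarrow> \<bar>w s\<bar> \<le> mu s"
  shows "\<exists>\<sigma>\<in>Wset n t. \<exists>c\<in>{-1..1}. \<forall>k<n.
           moment n t w k = c * switching_integral n t \<sigma> (\<lambda>s. mu s * taylor_kernel n t k s)"
proof -
  define clamp where "clamp s = max 0 (min t s)" for s
  have clamp: "clamp s \<in> {0..t}" "s \<in> {0..t} \<Longrightarrow> clamp s = s" for s
    using t by (auto simp: clamp_def)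
  have "continuous_on UNIV clamp" unfolding clamp_def[abs_def] by (intro continuous_intros)
  then have extend: "continuous_on UNIV (\<lambda>s. f (clamp s))" if "continuous_on {0..t} f" for f :: "real \<Rightarrow> real"
    by (rule continuous_on_compose2[OF that]) (use clamp in auto)
  interpret dominated_deviation n t "\<lambda>s. mu (clamp s)" "\<lambda>s. w (clamp s)"
    using t extend[OF cont(1)] extend[OF cont(2)] w_le clamp by unfold_locales auto
  have same: "integral {a..b} (\<lambda>s. f (clamp s) * g s) = integral {a..b} (\<lambda>s. f s * g s)"
    if "{a..b} \<subseteq> {0..t}" for f g :: "real \<Rightarrow> real" and a b
    using that clamp by (intro integral_cong) auto
  obtain \<sigma> c where \<sigma>: "\<sigma> \<in> Wset n t" and c: "c \<in> {-1..1}" and eq: "\<forall>k<n.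
      moment n t (\<lambda>s. w (clamp s)) k = c * switching_integral n t \<sigma> (\<lambda>s. mu (clamp s) * taylor_kernel n t k s)"
    using moment_bang_bang by blast
  have "{sig_ext n t \<sigma> i..sig_ext n t \<sigma> (Suc i)} \<subseteq> {0..t}" if "i < n" for i
    using sig_ext_in_Icc[OF \<sigma>, of i] sig_ext_in_Icc[OF \<sigma>, of "Suc i"] that t by auto
  then have "switching_integral n t \<sigma> (\<lambda>s. mu (clamp s) * taylor_kernel n t k s)
      = switching_integral n t \<sigma> (\<lambda>s. mu s * taylor_kernel n t k s)" for k
    unfolding switching_integral_def using same by (intro sum.cong) auto
  moreover have "moment n t (\<lambda>s. w (clamp s)) k = moment n t w k" for k
    unfolding moment_def by (rule same) simp
  ultimately show ?thesis using \<sigma> c eq by metis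
qed

lemma mat_pow_entry_bound:
  fixes B :: "real mat"
  assumes B: "B \<in> carrier_mat n n" and "i < n" "j < n"
  shows "\<bar>(B ^\<^sub>m k) $$ (i, j)\<bar> \<le> ((\<Sum>a<n. \<Sum>b<n. \<bar>B $$ (a, b)\<bar>) + 1) ^ k"
  using assms(2,3)
proof (induction k arbitrary: i j)
  case 0
  then show ?case using B by auto
next
  case (Suc k)
  define M where "M = (\<Sum>a<n. \<Sum>b<n. \<bar>B $$ (a, b)\<bar>) + 1"
  have M: "0 \<le> M" unfolding M_def by (intro add_nonneg_nonneg sum_nonneg) auto
  have column: "(\<Sum>l<n. \<bar>B $$ (l, j)\<bar>) \<le> M"
  proof -
    have "(\<Sum>l<n. \<bar>B $$ (l, j)\<bar>) \<le> (\<Sum>l<n. \<Sum>b<n. \<bar>B $$ (l, b)\<bar>)"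
      by (intro sum_mono member_le_sum[where f="\<lambda>b. \<bar>B $$ (_, b)\<bar>"]) (use Suc.prems in auto)
    then show ?thesis unfolding M_def by simp
  qed
  have "(B ^\<^sub>m Suc k) $$ (i, j) = (\<Sum>l<n. (B ^\<^sub>m k) $$ (i, l) * B $$ (l, j))"
    using B Suc.prems pow_carrier_mat[OF B, of k]
    by (auto simp: scalar_prod_def lessThan_atLeast0 intro!: sum.cong)
  then have "\<bar>(B ^\<^sub>m Suc k) $$ (i, j)\<bar> \<le> (\<Sum>l<n. \<bar>(B ^\<^sub>m k) $$ (i, l)\<bar> * \<bar>B $$ (l, j)\<bar>)"
    by (metis (no_types, lifting) abs_mult sum.cong sum_abs)
  also have "\<dots> \<le> (\<Sum>l<n. M ^ k * \<bar>B $$ (l, j)\<bar>)"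
    unfolding M_def by (intro sum_mono mult_right_mono Suc.IH Suc.prems) auto
  also have "\<dots> \<le> M ^ k * M"
    using column M by (simp add: sum_distrib_left[symmetric] mult_left_mono)
  finally show ?case by (simp add: M_def mult.commute)
qed

lemma continuous_on_mat_exp_entry:
  fixes B :: "real mat"
  assumes B: "B \<in> carrier_mat n n" and ij: "i < n" "j < n"
  shows "continuous_on S (\<lambda>r. mat_exp n r B $$ (i, j))"
proof -
  define M where "M = (\<Sum>a<n. \<Sum>b<n. \<bar>B $$ (a, b)\<bar>) + 1"
  define c where "c k = (B ^\<^sub>m k) $$ (i, j) / fact k" for k
  have "summable (\<lambda>k. c k * y ^ k)" for y :: real
  proof (rule summable_comparison_test')
    show "summable (\<lambda>k. inverse (fact k) * (M * \<bar>y\<bar>) ^ k)" by (rule summable_exp)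
    fix k :: nat
    have "norm (c k * y ^ k) = \<bar>(B ^\<^sub>m k) $$ (i, j)\<bar> * \<bar>y\<bar> ^ k / fact k"
      by (simp add: c_def abs_mult power_abs)
    also have "\<dots> \<le> M ^ k * \<bar>y\<bar> ^ k / fact k"
      unfolding M_def by (intro divide_right_mono mult_right_mono mat_pow_entry_bound[OF B ij]) auto
    finally show "norm (c k * y ^ k) \<le> inverse (fact k) * (M * \<bar>y\<bar>) ^ k"
      by (simp add: power_mult_distrib divide_inverse mult_ac)
  qed
  then have "continuous_on UNIV (\<lambda>r. \<Sum>k. c k * r ^ k)"
    by (intro continuous_at_imp_continuous_on ballI isCont_powser_converges_everywhere)
  moreover have "mat_exp n r B $$ (i, j) = (\<Sum>k. c k * r ^ k)" for r
    using ij by (simp add: mat_exp_def c_def mult_ac)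
  ultimately show ?thesis by (auto intro: continuous_on_subset)
qed

lemma continuous_on_scalar_prod_mat_exp:
  fixes B :: "real mat" and x y :: "real vec"
  assumes B: "B \<in> carrier_mat n n" and x: "dim_vec x = n"
  shows "continuous_on S (\<lambda>r. y \<bullet> (mat_exp n r B *\<^sub>v x))"
proof -
  have "y \<bullet> (mat_exp n r B *\<^sub>v x) = (\<Sum>i<n. y $ i * (\<Sum>j<n. mat_exp n r B $$ (i, j) * x $ j))" for r
    using x by (auto simp: scalar_prod_def mat_exp_def lessThan_atLeast0 row_def intro!: sum.cong)
  then show ?thesis
    by (simp only:) (intro continuous_intros continuous_on_mat_exp_entry[OF B]; simp)
qed

lemma integral_min_le_admissible:
  fixes F v :: "real \<Rightarrow> real"
  assumes "admissible_v lo hi s v" "continuous_on {0..s} F"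
  shows "integral {0..s} (\<lambda>\<tau>. min (F \<tau> * lo) (F \<tau> * hi)) \<le> integral {0..s} (\<lambda>\<tau>. F \<tau> * v \<tau>)"
proof (rule integral_le)
  have "continuous_on {0..s} v" using assms(1) by (simp add: admissible_v_def)
  then show "(\<lambda>\<tau>. F \<tau> * v \<tau>) integrable_on {0..s}"
    by (intro integrable_continuous_interval continuous_intros assms(2))
  show "(\<lambda>\<tau>. min (F \<tau> * lo) (F \<tau> * hi)) integrable_on {0..s}"
    by (intro integrable_continuous_interval continuous_intros assms(2))
  fix \<tau> assume "\<tau> \<in> {0..s}"
  then have "lo \<le> v \<tau>" "v \<tau> \<le> hi" using assms(1) by (auto simp: admissible_v_def)
  then show "min (F \<tau> * lo) (F \<tau> * hi) \<le> F \<tau> * v \<tau>"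
    by (cases "F \<tau> \<ge> 0") (auto simp: min_def intro: mult_left_mono mult_left_mono_neg)
qed

lemma mult_clamp_le_min:
  fixes F lo hi \<delta> K :: real
  assumes "lo \<le> hi" "0 < \<delta>" "K * \<delta> = (hi - lo) / 2"
  shows "F * max lo (min hi ((lo + hi) / 2 - K * F)) \<le> min (F * lo) (F * hi) + \<delta> * (hi - lo)"
proof -
  define v where "v = max lo (min hi ((lo + hi) / 2 - K * F))"
  have "0 \<le> K * \<delta>" using assms(1,3) by simp
  then have K: "0 \<le> K" using assms(2) by (simp add: zero_le_mult_iff)
  have v: "lo \<le> v" "v \<le> hi" using assms(1) by (auto simp: v_def)
  consider "\<delta> \<le> F" | "F \<le> -\<delta>" | "\<bar>F\<bar> < \<delta>" by linarith
  then have "F * v \<le> min (F * lo) (F * hi) + \<delta> * (hi - lo)"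
  proof cases
    case 1
    then have "K * \<delta> \<le> K * F" using K by (rule mult_left_mono)
    then have "v = lo" using assms by (simp add: v_def field_simps)
    moreover have "F * lo \<le> F * hi" using 1 assms by (intro mult_left_mono) auto
    ultimately show ?thesis using assms by (simp add: min_def)
  next
    case 2
    then have "K * \<delta> \<le> K * (- F)" using K by (intro mult_left_mono) auto
    then have "v = hi" using assms by (simp add: v_def field_simps)
    moreover have "F * hi \<le> F * lo" using 2 assms by (intro mult_left_mono_neg) auto
    ultimately show ?thesis using assms by (simp add: min_def)
  next
    case 3
    show ?thesis
    proof (cases "0 \<le> F")
      case True
      have "F * (v - lo) \<le> \<delta> * (hi - lo)" using 3 True v by (intro mult_mono) auto
      moreover have "F * lo \<le> F * hi" using True assms by (intro mult_left_mono) auto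
      ultimately show ?thesis by (simp add: min_def algebra_simps)
    next
      case False
      have "(- F) * (hi - v) \<le> \<delta> * (hi - lo)" using 3 False v by (intro mult_mono) auto
      moreover have "F * hi \<le> F * lo" using False assms by (intro mult_left_mono_neg) auto
      ultimately show ?thesis by (simp add: min_def algebra_simps)
    qed
  qed
  then show ?thesis unfolding v_def .
qed

lemma integral_le_with_final_layer:
  fixes g m :: "real \<Rightarrow> real"
  assumes h: "0 < h" "h \<le> s" and cont: "continuous_on {0..s} g" "continuous_on {0..s} m"
    and early: "\<And>\<tau>. \<tau> \<in> {0..s - h} \<Longrightarrow> g \<tau> \<le> m \<tau>"
    and late: "\<And>\<tau>. \<tau> \<in> {0..s} \<Longrightarrow> g \<tau> \<le> m \<tau> + b"
  shows "integral {0..s} g \<le> integral {0..s} m + h * b"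
proof -
  have integrable: "f integrable_on {x..y}" if "continuous_on {0..s} f" "{x..y} \<subseteq> {0..s}" for f :: "real \<Rightarrow> real" and x y
    by (rule integrable_on_subinterval[OF integrable_continuous_interval[OF that(1)] that(2)])
  have split: "integral {0..s} f = integral {0..s - h} f + integral {s - h..s} f"
    if "continuous_on {0..s} f" for f :: "real \<Rightarrow> real"
    by (rule Henstock_Kurzweil_Integration.integral_combine[symmetric])
      (use h that in \<open>auto intro: integrable_continuous_interval\<close>)
  have "integral {0..s - h} g \<le> integral {0..s - h} m"
    using h early by (intro integral_le integrable cont) auto
  moreover have "integral {s - h..s} g \<le> integral {s - h..s} (\<lambda>\<tau>. m \<tau> + b)"
    using h late by (intro integral_le integrable cont continuous_intros) auto
  moreover have "integral {s - h..s} (\<lambda>\<tau>. m \<tau> + b) = integral {s - h..s} m + h * b"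
    using h by (subst integral_add) (auto intro: integrable cont)
  ultimately show ?thesis using split[OF cont(1)] split[OF cont(2)] by linarith
qed

(* v follows the pointwise near-minimiser vK of F \<tau> * v \<tau> and ramps up to hi on the final layer
   [s - h, s], so that the endpoint term v s of the functional v s - \<integral> F v takes its largest value. *)
lemma admissible_ramp_integral_le:
  fixes F :: "real \<Rightarrow> real"
  assumes lohi: "lo \<le> hi" and h: "0 < h" "h \<le> s" and \<delta>: "0 < \<delta>" and cF: "continuous_on {0..s} F"
    and Mb: "\<And>\<tau>. \<tau> \<in> {0..s} \<Longrightarrow> \<bar>F \<tau>\<bar> \<le> Mb"
  shows "\<exists>v. admissible_v lo hi s v \<and> v s = hi \<and> integral {0..s} (\<lambda>\<tau>. F \<tau> * v \<tau>)
           \<le> integral {0..s} (\<lambda>\<tau>. min (F \<tau> * lo) (F \<tau> * hi)) + s * (\<delta> * (hi - lo)) + h * (Mb * (hi - lo))"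
proof -
  define D where "D = hi - lo"
  define vK where "vK \<tau> = max lo (min hi ((lo + hi) / 2 - D / (2 * \<delta>) * F \<tau>))" for \<tau>
  define v where "v \<tau> = min hi (max (vK \<tau>) (hi - D / h * (s - \<tau>)))" for \<tau>
  have vK: "lo \<le> vK \<tau>" "vK \<tau> \<le> hi" for \<tau> using lohi by (auto simp: vK_def)
  have v: "lo \<le> v \<tau>" "v \<tau> \<le> hi" for \<tau> using vK[of \<tau>] lohi by (auto simp: v_def)
  have "continuous_on {0..s} v" unfolding v_def[abs_def] vK_def by (intro continuous_intros cF)
  then have adm: "admissible_v lo hi s v" using v by (simp add: admissible_v_def)
  have integrable_min: "(\<lambda>\<tau>. min (F \<tau> * lo) (F \<tau> * hi)) integrable_on {0..s}"
    by (intro integrable_continuous_interval continuous_intros cF)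
  have clamped: "F \<tau> * vK \<tau> \<le> min (F \<tau> * lo) (F \<tau> * hi) + \<delta> * D" for \<tau>
    unfolding vK_def D_def using lohi \<delta> by (intro mult_clamp_le_min) simp_all
  have "integral {0..s} (\<lambda>\<tau>. F \<tau> * v \<tau>)
      \<le> integral {0..s} (\<lambda>\<tau>. min (F \<tau> * lo) (F \<tau> * hi) + \<delta> * D) + h * (Mb * D)"
  proof (rule integral_le_with_final_layer[OF h])
    show "continuous_on {0..s} (\<lambda>\<tau>. F \<tau> * v \<tau>)" using adm cF by (intro continuous_intros) (simp_all add: admissible_v_def)
    show "continuous_on {0..s} (\<lambda>\<tau>. min (F \<tau> * lo) (F \<tau> * hi) + \<delta> * D)" by (intro continuous_intros cF)
    show "F \<tau> * v \<tau> \<le> min (F \<tau> * lo) (F \<tau> * hi) + \<delta> * D" if "\<tau> \<in> {0..s - h}" for \<tau>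
    proof -
      have "D / h * h \<le> D / h * (s - \<tau>)" using that h lohi by (intro mult_left_mono) (auto simp: D_def)
      then have "v \<tau> = vK \<tau>" using h vK[of \<tau>] by (simp add: v_def D_def)
      then show ?thesis using clamped by simp
    qed
    show "F \<tau> * v \<tau> \<le> min (F \<tau> * lo) (F \<tau> * hi) + \<delta> * D + Mb * D" if "\<tau> \<in> {0..s}" for \<tau>
    proof -
      have "F \<tau> * (v \<tau> - vK \<tau>) \<le> \<bar>F \<tau>\<bar> * \<bar>v \<tau> - vK \<tau>\<bar>" by (metis abs_ge_self abs_mult)
      also have "\<dots> \<le> Mb * D"
        using Mb[OF that] v[of \<tau>] vK[of \<tau>] by (intro mult_mono) (auto simp: D_def abs_le_iff)
      finally show ?thesis using clamped[of \<tau>] by (simp add: algebra_simps)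
    qed
  qed
  also have "integral {0..s} (\<lambda>\<tau>. min (F \<tau> * lo) (F \<tau> * hi) + \<delta> * D)
      = integral {0..s} (\<lambda>\<tau>. min (F \<tau> * lo) (F \<tau> * hi)) + s * (\<delta> * D)"
    using h integrable_min by (subst integral_add) auto
  finally show ?thesis using adm vK[of s] by (intro exI[of _ v]) (simp add: v_def D_def)
qed

lemma admissible_approx_Sup:
  fixes F :: "real \<Rightarrow> real"
  assumes lohi: "lo \<le> hi" and s: "0 \<le> s" and cF: "continuous_on {0..s} F" and \<gamma>: "0 < \<gamma>"
  shows "\<exists>v. admissible_v lo hi s v \<and>
           hi - integral {0..s} (\<lambda>\<tau>. min (F \<tau> * lo) (F \<tau> * hi)) - \<gamma> \<le> v s - integral {0..s} (\<lambda>\<tau>. F \<tau> * v \<tau>)"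
proof (cases "lo = hi \<or> s = 0")
  case True
  have "admissible_v lo hi s (\<lambda>_. hi)" using lohi by (simp add: admissible_v_def)
  moreover have "integral {0..s} (\<lambda>\<tau>. F \<tau> * hi) = integral {0..s} (\<lambda>\<tau>. min (F \<tau> * lo) (F \<tau> * hi))"
    using True by auto
  ultimately show ?thesis using \<gamma> by (intro exI[of _ "\<lambda>_. hi"]) auto
next
  case False
  define D where "D = hi - lo"
  have D: "0 < D" and s_pos: "0 < s" using False lohi s by (auto simp: D_def)
  obtain Mb where Mb: "0 \<le> Mb" "\<And>\<tau>. \<tau> \<in> {0..s} \<Longrightarrow> \<bar>F \<tau>\<bar> \<le> Mb"
    using continuous_on_compact_bound[OF compact_Icc cF] by (metis real_norm_def norm_ge_zero order_trans)
  define \<delta> where "\<delta> = \<gamma> / (2 * (s * D + 1))"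
  define h where "h = min s (\<gamma> / (2 * (Mb * D + 1)))"
  have sD: "0 \<le> s * D" and MbD: "0 \<le> Mb * D" using s D Mb by simp_all
  have \<delta>: "0 < \<delta>" "s * (\<delta> * D) \<le> \<gamma> / 2"
    using \<gamma> sD by (simp_all add: \<delta>_def field_simps add_pos_nonneg)
  have h: "0 < h" "h \<le> s" using s_pos \<gamma> MbD by (simp_all add: h_def add_pos_nonneg)
  have "h * (Mb * D) \<le> \<gamma> / (2 * (Mb * D + 1)) * (Mb * D)"
    using MbD by (intro mult_right_mono) (simp_all add: h_def)
  also have "\<dots> \<le> \<gamma> / 2" using \<gamma> MbD by (simp add: field_simps)
  finally have hMbD: "h * (Mb * D) \<le> \<gamma> / 2" .
  obtain v where v: "admissible_v lo hi s v" "v s = hi" "integral {0..s} (\<lambda>\<tau>. F \<tau> * v \<tau>)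
      \<le> integral {0..s} (\<lambda>\<tau>. min (F \<tau> * lo) (F \<tau> * hi)) + s * (\<delta> * D) + h * (Mb * D)"
    using admissible_ramp_integral_le[OF lohi h \<delta>(1) cF Mb(2)] unfolding D_def by blast
  show ?thesis using v \<delta>(2) hMbD by (intro exI[of _ v] conjI) (simp, linarith)
qed

lemma Sup_admissible_endpoint_functional:
  fixes F :: "real \<Rightarrow> real"
  assumes lohi: "lo \<le> hi" and s: "0 \<le> s" and cF: "continuous_on {0..s} F"
  shows "Sup {v s - integral {0..s} (\<lambda>\<tau>. F \<tau> * v \<tau>) | v. admissible_v lo hi s v}
         = hi - integral {0..s} (\<lambda>\<tau>. min (F \<tau> * lo) (F \<tau> * hi))"
proof (rule cSup_eq_non_empty)
  have "admissible_v lo hi s (\<lambda>_. hi)" using lohi by (simp add: admissible_v_def)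
  then show "{v s - integral {0..s} (\<lambda>\<tau>. F \<tau> * v \<tau>) | v. admissible_v lo hi s v} \<noteq> {}" by blast
next
  fix x assume "x \<in> {v s - integral {0..s} (\<lambda>\<tau>. F \<tau> * v \<tau>) | v. admissible_v lo hi s v}"
  then obtain v where v: "admissible_v lo hi s v" "x = v s - integral {0..s} (\<lambda>\<tau>. F \<tau> * v \<tau>)" by blast
  then have "v s \<le> hi" using s by (simp add: admissible_v_def)
  with v integral_min_le_admissible[OF v(1) cF]
  show "x \<le> hi - integral {0..s} (\<lambda>\<tau>. min (F \<tau> * lo) (F \<tau> * hi))" by simp
next
  fix y assume ub: "\<And>x. x \<in> {v s - integral {0..s} (\<lambda>\<tau>. F \<tau> * v \<tau>) | v. admissible_v lo hi s v} \<Longrightarrow> x \<le> y"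
  show "hi - integral {0..s} (\<lambda>\<tau>. min (F \<tau> * lo) (F \<tau> * hi)) \<le> y"
  proof (rule field_le_epsilon)
    fix \<gamma> :: real assume "0 < \<gamma>"
    then obtain v where v: "admissible_v lo hi s v"
      "hi - integral {0..s} (\<lambda>\<tau>. min (F \<tau> * lo) (F \<tau> * hi)) - \<gamma> \<le> v s - integral {0..s} (\<lambda>\<tau>. F \<tau> * v \<tau>)"
      using admissible_approx_Sup[OF lohi s cF] by blast
    have "v s - integral {0..s} (\<lambda>\<tau>. F \<tau> * v \<tau>) \<le> y" using v(1) by (intro ub) blast
    with v(2) show "hi - integral {0..s} (\<lambda>\<tau>. min (F \<tau> * lo) (F \<tau> * hi)) \<le> y + \<gamma>" by linarith
  qed
qed

lemma admissible_v_uminus: "admissible_v lo hi s v \<Longrightarrow> admissible_v (- hi) (- lo) s (\<lambda>\<tau>. - v \<tau>)"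
  unfolding admissible_v_def by (auto intro: continuous_on_minus)

lemma Inf_admissible_endpoint_functional:
  fixes F :: "real \<Rightarrow> real"
  assumes lohi: "lo \<le> hi" and s: "0 \<le> s" and cF: "continuous_on {0..s} F"
  shows "Inf {v s - integral {0..s} (\<lambda>\<tau>. F \<tau> * v \<tau>) | v. admissible_v lo hi s v}
         = lo - integral {0..s} (\<lambda>\<tau>. max (F \<tau> * lo) (F \<tau> * hi))"
proof -
  let ?X = "\<lambda>lo hi. {v s - integral {0..s} (\<lambda>\<tau>. F \<tau> * v \<tau>) | v. admissible_v lo hi s v}"
  have "uminus ` ?X lo hi = ?X (- hi) (- lo)"
  proof (intro equalityI subsetI)
    fix x assume "x \<in> uminus ` ?X lo hi"
    then obtain v where "admissible_v lo hi s v" "x = - (v s - integral {0..s} (\<lambda>\<tau>. F \<tau> * v \<tau>))" by blast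
    then show "x \<in> ?X (- hi) (- lo)"
      by (intro CollectI exI[of _ "\<lambda>\<tau>. - v \<tau>"]) (simp add: admissible_v_uminus)
  next
    fix x assume "x \<in> ?X (- hi) (- lo)"
    then obtain v where v: "admissible_v (- hi) (- lo) s v" "x = v s - integral {0..s} (\<lambda>\<tau>. F \<tau> * v \<tau>)" by blast
    then have "- x \<in> ?X lo hi"
      using admissible_v_uminus[OF v(1)] by (intro CollectI exI[of _ "\<lambda>\<tau>. - v \<tau>"]) simp
    then show "x \<in> uminus ` ?X lo hi" by (rule rev_image_eqI) simp
  qed
  then have "Inf (?X lo hi) = - Sup (?X (- hi) (- lo))" by (simp add: Inf_real_def)
  also have "\<dots> = - (- lo - integral {0..s} (\<lambda>\<tau>. min (F \<tau> * - hi) (F \<tau> * - lo)))"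
    using lohi s cF by (subst Sup_admissible_endpoint_functional) auto
  also have "(\<lambda>\<tau>. min (F \<tau> * - hi) (F \<tau> * - lo)) = (\<lambda>\<tau>. - max (F \<tau> * lo) (F \<tau> * hi))"
    by (auto simp: min_def max_def fun_eq_iff)
  finally show ?thesis by simp
qed

lemma integral_reflect_Icc0:
  fixes f :: "real \<Rightarrow> real"
  assumes "f integrable_on {0..s}"
  shows "integral {0..s} (\<lambda>\<tau>. f (s - \<tau>)) = integral {0..s} f"
proof -
  have "((\<lambda>x. f (- x)) has_integral integral {0..s} f) {-s..-0}"
    using integrable_integral[OF assms] by (subst has_integral_reflect_real)
  then have "(((\<lambda>x. f (- x)) \<circ> (+) (- s)) has_integral integral {0..s} f) {0..s}"
    using has_integral_shift_Icc_real[of "\<lambda>x. f (- x)" "-s" _ 0 s] by simp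
  then show ?thesis by (intro integral_unique) (simp add: o_def)
qed

lemma continuous_on_fker: "continuous_on S (\<lambda>r. fker n A r 0)"
  unfolding fker_def diff_zero by (rule continuous_on_scalar_prod_mat_exp) (simp_all add: Acon_def bcon_def)

lemma fker_shift: "fker n A s \<tau> = fker n A (s - \<tau>) 0"
  by (simp add: fker_def)

lemma Imax_eq:
  assumes "vmin \<le> vmax" "0 \<le> s"
  shows "Imax n A vmin vmax s = vmax - integral {0..s} (\<lambda>r. min (fker n A r 0 * vmin) (fker n A r 0 * vmax))"
proof -
  have "continuous_on {0..s} (fker n A s)"
    unfolding fker_shift[of n A s] by (intro continuous_on_compose2[OF continuous_on_fker] continuous_intros) auto
  then have "Imax n A vmin vmax s
      = vmax - integral {0..s} (\<lambda>\<tau>. min (fker n A (s - \<tau>) 0 * vmin) (fker n A (s - \<tau>) 0 * vmax))"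
    unfolding Imax_def Ifun_def using assms by (simp add: Sup_admissible_endpoint_functional fker_shift[of n A s])
  also have "integral {0..s} (\<lambda>\<tau>. min (fker n A (s - \<tau>) 0 * vmin) (fker n A (s - \<tau>) 0 * vmax))
      = integral {0..s} (\<lambda>r. min (fker n A r 0 * vmin) (fker n A r 0 * vmax))"
    by (intro integral_reflect_Icc0 integrable_continuous_interval continuous_intros continuous_on_fker)
  finally show ?thesis .
qed

lemma Imin_eq:
  assumes "vmin \<le> vmax" "0 \<le> s"
  shows "Imin n A vmin vmax s = vmin - integral {0..s} (\<lambda>r. max (fker n A r 0 * vmin) (fker n A r 0 * vmax))"
proof -
  have "continuous_on {0..s} (fker n A s)"
    unfolding fker_shift[of n A s] by (intro continuous_on_compose2[OF continuous_on_fker] continuous_intros) auto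
  then have "Imin n A vmin vmax s
      = vmin - integral {0..s} (\<lambda>\<tau>. max (fker n A (s - \<tau>) 0 * vmin) (fker n A (s - \<tau>) 0 * vmax))"
    unfolding Imin_def Ifun_def using assms by (simp add: Inf_admissible_endpoint_functional fker_shift[of n A s])
  also have "integral {0..s} (\<lambda>\<tau>. max (fker n A (s - \<tau>) 0 * vmin) (fker n A (s - \<tau>) 0 * vmax))
      = integral {0..s} (\<lambda>r. max (fker n A r 0 * vmin) (fker n A r 0 * vmax))"
    by (intro integral_reflect_Icc0 integrable_continuous_interval continuous_intros continuous_on_fker)
  finally show ?thesis .
qed

lemma continuous_on_umin_umax:
  assumes "vmin \<le> vmax" "0 \<le> t"
  shows "continuous_on {0..t} (umin n A b vmin vmax z0)" "continuous_on {0..t} (umax n A b vmin vmax z0)"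
proof -
  let ?free = "\<lambda>s. - (cvec n A \<bullet> (mat_exp n s (Acon n A) *\<^sub>v (Mmat n A b *\<^sub>v z0)))"
  have free: "continuous_on {0..t} (\<lambda>s. cvec n A \<bullet> (mat_exp n s (Acon n A) *\<^sub>v (Mmat n A b *\<^sub>v z0)))"
    by (rule continuous_on_scalar_prod_mat_exp) (simp_all add: Acon_def Mmat_def)
  have primitive: "continuous_on {0..t} (\<lambda>s. integral {0..s} f)" if "continuous_on UNIV f" for f :: "real \<Rightarrow> real"
    by (intro indefinite_integral_continuous_1 integrable_continuous_interval continuous_on_subset[OF that]) simp
  have "continuous_on {0..t} (\<lambda>s. ?free s + (vmin - integral {0..s} (\<lambda>r. max (fker n A r 0 * vmin) (fker n A r 0 * vmax))))"
    by (intro continuous_intros free primitive continuous_on_fker)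
  then show "continuous_on {0..t} (umin n A b vmin vmax z0)"
    by (rule continuous_on_eq) (use assms in \<open>simp add: umin_def Imin_eq\<close>)
  have "continuous_on {0..t} (\<lambda>s. ?free s + (vmax - integral {0..s} (\<lambda>r. min (fker n A r 0 * vmin) (fker n A r 0 * vmax))))"
    by (intro continuous_intros free primitive continuous_on_fker)
  then show "continuous_on {0..t} (umax n A b vmin vmax z0)"
    by (rule continuous_on_eq) (use assms in \<open>simp add: umax_def Imax_eq\<close>)
qed

lemma integrator_field_component:
  assumes "i < n" "dim_vec v = n"
  shows "(Aint n *\<^sub>v v + c \<cdot>\<^sub>v bcon n) $ i = (if i < n - 1 then v $ Suc i else c)"
proof -
  have "(Aint n *\<^sub>v v) $ i = (\<Sum>j\<in>{0..<n}. (if i < n - 1 \<and> j = Suc i then 1 else 0) * v $ j)"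
    using assms by (simp add: Aint_def scalar_prod_def row_def)
  also have "\<dots> = (\<Sum>j\<in>{0..<n}. if j = Suc i then (if i < n - 1 then v $ j else 0) else 0)"
    by (intro sum.cong) auto
  also have "\<dots> = (if i < n - 1 then v $ Suc i else 0)"
    using assms by auto
  finally show ?thesis using assms by (auto simp: bcon_def Aint_def)
qed

lemma integrator_chain_taylor:
  fixes x :: "real \<Rightarrow> real vec" and u :: "real \<Rightarrow> real"
  assumes dim: "\<And>s. dim_vec (x s) = n" and t: "0 \<le> t" and k: "k < n"
    and der: "\<And>s i. s \<in> {0..t} \<Longrightarrow> i < n \<Longrightarrow>
         ((\<lambda>r. x r $ i) has_real_derivative ((Aint n *\<^sub>v x s + u s \<cdot>\<^sub>v bcon n) $ i)) (at s within {0..t})"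
  shows "x t $ k = chi n t (x 0) $ k + integral {0..t} (\<lambda>s. taylor_kernel n t k s * u s)"
proof -
  define Df where "Df m = (if m < n - k then (\<lambda>r. x r $ (k + m)) else u)" for m
  have "x t $ k = (\<Sum>i<n - k. ((t - 0) ^ i / fact i) *\<^sub>R Df i 0) +
      integral {0..t} (\<lambda>s. ((t - s) ^ (n - k - 1) / fact (n - k - 1)) *\<^sub>R Df (n - k) s)"
  proof (rule Taylor_integral[where f="\<lambda>r. x r $ k"])
    fix m s assume m: "m < n - k" and s: "0 \<le> s" "s \<le> t"
    have "((\<lambda>r. x r $ (k + m)) has_real_derivative ((Aint n *\<^sub>v x s + u s \<cdot>\<^sub>v bcon n) $ (k + m))) (at s within {0..t})"
      using der[of s "k + m"] s m by simp
    also have "(Aint n *\<^sub>v x s + u s \<cdot>\<^sub>v bcon n) $ (k + m) = Df (Suc m) s"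
      using integrator_field_component[of "k + m" n "x s" "u s"] m dim[of s] by (auto simp: Df_def)
    finally show "(Df m has_vector_derivative Df (Suc m) s) (at s within {0..t})"
      using m by (simp add: Df_def has_real_derivative_iff_has_vector_derivative)
  qed (use k t in \<open>simp_all add: Df_def\<close>)
  also have "(\<Sum>i<n - k. ((t - 0) ^ i / fact i) *\<^sub>R Df i 0) = (\<Sum>i<n - k. t ^ i / fact i * x 0 $ (k + i))"
    by (simp add: Df_def)
  also have "\<dots> = (\<Sum>l\<in>(\<lambda>i. k + i) ` {..<n - k}. t ^ (l - k) / fact (l - k) * x 0 $ l)"
    by (subst sum.reindex) (auto simp: inj_on_def)
  also have "(\<lambda>i. k + i) ` {..<n - k} = {k..n - 1}"
  proof (intro equalityI subsetI)
    fix l assume "l \<in> {k..n - 1}"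
    then show "l \<in> (\<lambda>i. k + i) ` {..<n - k}" using k by (intro image_eqI[of _ _ "l - k"]) auto
  qed (use k in auto)
  also have "(\<Sum>l\<in>{k..n - 1}. t ^ (l - k) / fact (l - k) * x 0 $ l) = chi n t (x 0) $ k"
    using k by (simp add: chi_def)
  also have "(\<lambda>s. ((t - s) ^ (n - k - 1) / fact (n - k - 1)) *\<^sub>R Df (n - k) s) = (\<lambda>s. taylor_kernel n t k s * u s)"
    by (simp add: Df_def taylor_kernel_def fun_eq_iff)
  finally show ?thesis .
qed

lemma xi_component: "k < n \<Longrightarrow> xi n (t - s) $ k = taylor_kernel n t k s"
  by (simp add: xi_def taylor_kernel_def)

lemma x_bound_convex_combination:
  assumes k: "k < n"
  shows "(lam \<cdot>\<^sub>v x_upper n ul uh t x0 \<sigma> + (1 - lam) \<cdot>\<^sub>v x_lower n ul uh t x0 \<sigma>) $ k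
       = chi n t x0 $ k + integral {0..t} (\<lambda>s. (uh s + ul s) / 2 * taylor_kernel n t k s)
         + (2 * lam - 1) * switching_integral n t \<sigma> (\<lambda>s. (uh s - ul s) / 2 * taylor_kernel n t k s)"
proof -
  let ?I = "integral {0..t} (\<lambda>s. (uh s + ul s) / 2 * taylor_kernel n t k s)"
  let ?S = "switching_integral n t \<sigma> (\<lambda>s. (uh s - ul s) / 2 * taylor_kernel n t k s)"
  have "(\<Sum>i=1..n. (-1) ^ (i - 1) * integral {sig_ext n t \<sigma> (i - 1)..sig_ext n t \<sigma> i}
           (\<lambda>s. (uh s - ul s) / 2 * xi n (t - s) $ k)) = ?S"
    unfolding switching_integral_def One_nat_def sum.atLeast1_atMost_eq by (simp add: xi_component[OF k])
  moreover have "integral {0..t} (\<lambda>s. (uh s + ul s) / 2 * xi n (t - s) $ k) = ?I"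
    by (simp add: xi_component[OF k])
  ultimately have "x_upper n ul uh t x0 \<sigma> $ k = chi n t x0 $ k + ?I + ?S"
    "x_lower n ul uh t x0 \<sigma> $ k = chi n t x0 $ k + ?I - ?S"
    using k by (simp_all add: x_upper_def x_lower_def x_bound_def)
  moreover have "dim_vec (x_upper n ul uh t x0 \<sigma>) = n" "dim_vec (x_lower n ul uh t x0 \<sigma>) = n"
    by (simp_all add: x_upper_def x_lower_def x_bound_def)
  moreover have "lam * (x + I + S) + (1 - lam) * (x + I - S) = x + I + (2 * lam - 1) * S" for x I S :: real
    by (simp add: algebra_simps)
  ultimately show ?thesis using k by simp
qed

lemma integral_kernel_decompose:
  assumes "continuous_on {0..t} u" "continuous_on {0..t} \<nu>"
  shows "integral {0..t} (\<lambda>s. taylor_kernel n t k s * u s)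
       = integral {0..t} (\<lambda>s. \<nu> s * taylor_kernel n t k s) + moment n t (\<lambda>s. u s - \<nu> s) k"
proof -
  have "integral {0..t} (\<lambda>s. taylor_kernel n t k s * u s)
      = integral {0..t} (\<lambda>s. \<nu> s * taylor_kernel n t k s + (u s - \<nu> s) * taylor_kernel n t k s)"
    by (simp add: algebra_simps)
  also have "\<dots> = integral {0..t} (\<lambda>s. \<nu> s * taylor_kernel n t k s) + moment n t (\<lambda>s. u s - \<nu> s) k"
    unfolding moment_def using assms
    by (intro integral_add integrable_continuous_interval continuous_intros continuous_on_subset[OF continuous_on_taylor_kernel]) auto
  finally show ?thesis .
qed

lemma input_moments_bang_bang:
  assumes t: "0 < t" and cont: "continuous_on {0..t} ul" "continuous_on {0..t} uh" "continuous_on {0..t} u"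
    and u: "\<And>s. s \<in> {0..t} \<Longrightarrow> ul s \<le> u s \<and> u s \<le> uh s"
  shows "\<exists>\<sigma>\<in>Wset n t. \<exists>c\<in>{-1..1}. \<forall>k<n. integral {0..t} (\<lambda>s. taylor_kernel n t k s * u s)
           = integral {0..t} (\<lambda>s. (uh s + ul s) / 2 * taylor_kernel n t k s)
             + c * switching_integral n t \<sigma> (\<lambda>s. (uh s - ul s) / 2 * taylor_kernel n t k s)"
proof -
  have "\<bar>u s - (uh s + ul s) / 2\<bar> \<le> (uh s - ul s) / 2" if "s \<in> {0..t}" for s
    using u[OF that] unfolding abs_le_iff by (auto simp: field_simps)
  moreover have "continuous_on {0..t} (\<lambda>s. (uh s - ul s) / 2)" "continuous_on {0..t} (\<lambda>s. u s - (uh s + ul s) / 2)"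
    using cont by (intro continuous_intros; simp)+
  ultimately obtain \<sigma> c where \<sigma>: "\<sigma> \<in> Wset n t" and c: "c \<in> {-1..1}" and moments: "\<forall>k<n.
      moment n t (\<lambda>s. u s - (uh s + ul s) / 2) k
        = c * switching_integral n t \<sigma> (\<lambda>s. (uh s - ul s) / 2 * taylor_kernel n t k s)"
    using moment_bang_bang_Icc t by blast
  have "continuous_on {0..t} (\<lambda>s. (uh s + ul s) / 2)" using cont by (intro continuous_intros; simp)
  from integral_kernel_decompose[OF cont(3) this] show ?thesis
    using \<sigma> c moments by (intro bexI[of _ \<sigma>] bexI[of _ c]) simp_all
qed

lemma reach_int_taylor:
  assumes "xt \<in> reach_int n ul uh t x0" "0 \<le> t"
  obtains u where "continuous_on {0..t} u" "\<And>s. s \<in> {0..t} \<Longrightarrow> ul s \<le> u s \<and> u s \<le> uh s"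
    "dim_vec xt = n" "\<And>k. k < n \<Longrightarrow> xt $ k = chi n t x0 $ k + integral {0..t} (\<lambda>s. taylor_kernel n t k s * u s)"
proof -
  from assms(1) obtain x u where xt: "xt = x t" and u: "continuous_on {0..t} u" "\<And>s. s \<in> {0..t} \<Longrightarrow> ul s \<le> u s \<and> u s \<le> uh s"
    and x: "\<And>s. dim_vec (x s) = n" "x 0 = x0"
      "\<And>s i. s \<in> {0..t} \<Longrightarrow> i < n \<Longrightarrow>
         ((\<lambda>r. x r $ i) has_real_derivative ((Aint n *\<^sub>v x s + u s \<cdot>\<^sub>v bcon n) $ i)) (at s within {0..t})"
    unfolding reach_int_def by blast
  show ?thesis
  proof (rule that[OF u])
    show "dim_vec xt = n" using xt x(1) by simp
    show "xt $ k = chi n t x0 $ k + integral {0..t} (\<lambda>s. taylor_kernel n t k s * u s)" if "k < n" for k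
      using integrator_chain_taylor[OF x(1) assms(2) that x(3)] xt x(2) by simp
  qed
qed

theorem theorem3:
  fixes n :: nat and A :: "real mat" and b z0 :: "real vec" and vmin vmax t :: real
  assumes "n \<ge> 1"
    and "A \<in> carrier_mat n n" and "dim_vec b = n" and "dim_vec z0 = n"
    and "controllable n A b"
    and "distinct_eigenvalues n A"
    and "vmin \<le> vmax" and "t > 0"
  defines "x0 \<equiv> Mmat n A b *\<^sub>v z0"
    and "ul \<equiv> umin n A b vmin vmax z0"
    and "uh \<equiv> umax n A b vmin vmax z0"
  shows "\<forall>x \<in> reach_int n ul uh t x0. \<exists>\<sigma> \<in> Wset n t. \<exists>lam \<in> {0..1::real}.
           x = lam \<cdot>\<^sub>v x_upper n ul uh t x0 \<sigma> + (1 - lam) \<cdot>\<^sub>v x_lower n ul uh t x0 \<sigma>"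
proof
  (* Only vmin \<le> vmax and 0 < t are used: the argument works for every initial state and all
     continuous input bounds; the hypotheses on A and b only relate this integrator reach set to
     the reach set of the original system. *)
  fix xt assume "xt \<in> reach_int n ul uh t x0"
  then obtain u where u: "continuous_on {0..t} u" "\<And>s. s \<in> {0..t} \<Longrightarrow> ul s \<le> u s \<and> u s \<le> uh s"
    "dim_vec xt = n" "\<And>k. k < n \<Longrightarrow> xt $ k = chi n t x0 $ k + integral {0..t} (\<lambda>s. taylor_kernel n t k s * u s)"
    using reach_int_taylor[OF _ less_imp_le[OF assms(8)]] by blast
  have "continuous_on {0..t} ul" "continuous_on {0..t} uh"
    using continuous_on_umin_umax assms(7,8) unfolding ul_def uh_def by auto
  then obtain \<sigma> c where \<sigma>: "\<sigma> \<in> Wset n t" and c: "c \<in> {-1..1}" and moments: "\<forall>k<n.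
      integral {0..t} (\<lambda>s. taylor_kernel n t k s * u s)
        = integral {0..t} (\<lambda>s. (uh s + ul s) / 2 * taylor_kernel n t k s)
          + c * switching_integral n t \<sigma> (\<lambda>s. (uh s - ul s) / 2 * taylor_kernel n t k s)"
    using input_moments_bang_bang[OF assms(8) _ _ u(1,2)] by blast
  show "\<exists>\<sigma>\<in>Wset n t. \<exists>lam\<in>{0..1::real}. xt = lam \<cdot>\<^sub>v x_upper n ul uh t x0 \<sigma> + (1 - lam) \<cdot>\<^sub>v x_lower n ul uh t x0 \<sigma>"
  proof (intro bexI[OF _ \<sigma>] bexI[of _ "(1 + c) / 2"] eq_vecI)
    fix k assume "k < dim_vec ((1 + c) / 2 \<cdot>\<^sub>v x_upper n ul uh t x0 \<sigma> + (1 - (1 + c) / 2) \<cdot>\<^sub>v x_lower n ul uh t x0 \<sigma>)"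
    then have k: "k < n" by (simp add: x_lower_def x_bound_def)
    then have "xt $ k = chi n t x0 $ k + integral {0..t} (\<lambda>s. (uh s + ul s) / 2 * taylor_kernel n t k s)
        + c * switching_integral n t \<sigma> (\<lambda>s. (uh s - ul s) / 2 * taylor_kernel n t k s)"
      using u(4) moments by simp
    also have "\<dots> = ((1 + c) / 2 \<cdot>\<^sub>v x_upper n ul uh t x0 \<sigma> + (1 - (1 + c) / 2) \<cdot>\<^sub>v x_lower n ul uh t x0 \<sigma>) $ k"
      unfolding x_bound_convex_combination[OF k] by (simp add: field_simps)
    finally show "xt $ k = \<dots>" .
  qed (use c u(3) in \<open>simp_all add: x_lower_def x_bound_def\<close>)
qed

end
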